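(* Let $F(\vec{\mathbf p},\mathbf q)$ be a disjunctive template, $\Gamma\subseteq\mathit{Fml}_J$ a set of basic formulas (containing no witness variables), $\vec\chi$ a sequence of Henkin formulas, $\forall x\varphi(x)$ a Henkin formula, and $a$ a witness variable that occurs free neither in $\forall x\varphi(x)$ nor in any member of $\vec\chi$. If $\Gamma\cup[\![\neg F(\vec\chi,\forall x\varphi(x))]\!]$ is consistent, then $\Gamma\cup[\![\neg F(\vec\chi,\varphi(a))]\!]$ is consistent.
   Context: Syntax of FOLPb: terms $t::=p_i\mid c\mid t\cdot t\mid t+t\mid !t\mid\mathsf b(t)\mid\mathsf{gen}_x(t)$; formulas $Px_1\dots x_n\mid\bot\mid\varphi\to\varphi\mid\forall x\varphi\mid t{:}_X\varphi$ ($X$ finite set of individual variables, $fv(t{:}_X\psi)=X$); $\mathit{Fml}_J$ is the set of these basic formulas. Axioms: A1 classical first-order; A2 $t{:}_{Xy}\varphi\to t{:}_X\varphi$ ($y$ not free in $\varphi$); A3 $t{:}_X\varphi\to t{:}_{Xy}\varphi$; B1 $t{:}_X\varphi\to\varphi$; B2 $t{:}_X(\varphi\to\psi)\to(s{:}_X\varphi\to[t\cdot s]{:}_X\psi)$; B3 $t{:}_X\varphi\to[t+s]{:}_X\varphi$, $s{:}_X\varphi\to[t+s]{:}_X\varphi$; B4 $t{:}_X\varphi\to!t{:}_Xt{:}_X\varphi$; B5 $t{:}_X\varphi\to\mathsf{gen}_x(t){:}_X\forall x\varphi$ ($x\notin X$); Bb $\forall y\,t{:}_{Xy}\varphi(y)\to\mathsf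 b(t){:}_X\forall y\varphi(y)$; rules MP and generalization (from hypotheses, not on variables free in the hypotheses). Henkin language: $\mathbf V$ countable set of witness variables that may occur free (including in subscripts) but are never quantified nor $\mathsf{gen}$ subscripts; the original variables are basic variables; Henkin formulas $\mathit{Fml}_J(\mathbf V)$. Standing assumption: $\mathcal{CS}$ is a fixed variant closed and axiomatically appropriate constant specification for the basic language; $\mathcal{CS}(\mathbf V)$ is the set of all $c{:}\psi$ with $c{:}\varphi\in\mathcal{CS}$ and $\psi$ obtained by replacing some free basic variables of $\varphi$ with distinct witness variables; $\vdash$ and "consistent" refer to the axiom system over $\mathit{Fml}_J(\mathbf V)$ with $\mathcal{CS}(\mathbf V)$ ($\Gamma$ consistent iff $\Gamma\not\vdash\bot$). Templates: a template on distinct propositional letters is a propositional modal formula built with $\neg,\vee,\wedge,\Box$, each letter occurring at most once; disjunctive if its only Boolean connective is $\vee$. Instantiation sets for Henkin formulas $\vec\varphi$: $[\![\mathbf p_i]\!]=\{\varphi_i\}$; $[\![\neg G]\!]=\{\neg\psi:\psi\in[\![G]\!]\}$; $[\![G\vee H]\!]=\{\psi\vee\theta:\psi\in[\![G]\!],\theta\in[\![H]\!]\}$; $[\![G\wedge H]\!]$ likewise with $\wedge$; $[\![\Box G]\!]=\{t{:}_X\psi:\psi\in[\![G]\!], t$ any term, $X$ the set of witness variables in $\psi\}$ (all evaluated at $\vec\varphi$). *)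

theory Defs
  imports Main "HOL-Library.FSet"
begin

text \<open>Individual variables: basic variables BV n and witness variables WV n.\<close>
datatype var = BV nat | WV nat

fun is_wit :: "var \<Rightarrow> bool" where
  "is_wit (BV n) = False"
| "is_wit (WV n) = True"

text \<open>Justification terms: p_i, c, t.s, t+s, !t, b(t), gen_x(t).\<close>
datatype jt = JV nat | JC nat | JApp jt jt | JSum jt jt | JBang jt | JB jt | JGen var jt

text \<open>Formulas: P x1..xn, bottom, implication, universal quantifier, t:_X phi (X finite).\<close>
datatype fm = Pred nat "var list" | Bot | Imp fm fm | All var fm | Just jt "var fset" fm

definition Neg :: "fm \<Rightarrow> fm" where "Neg p = Imp p Bot"
definition Or :: "fm \<Rightarrow> fm \<Rightarrow> fm" where "Or p q = Imp (Neg p) q"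
definition And :: "fm \<Rightarrow> fm \<Rightarrow> fm" where "And p q = Neg (Imp p (Neg q))"

fun fv :: "fm \<Rightarrow> var set" where
  "fv (Pred P xs) = set xs"
| "fv Bot = {}"
| "fv (Imp p q) = fv p \<union> fv q"
| "fv (All x p) = fv p - {x}"
| "fv (Just t X p) = fset X"

fun witst :: "jt \<Rightarrow> var fset" where
  "witst (JV n) = {||}"
| "witst (JC n) = {||}"
| "witst (JApp t s) = witst t |\<union>| witst s"
| "witst (JSum t s) = witst t |\<union>| witst s"
| "witst (JBang t) = witst t"
| "witst (JB t) = witst t"
| "witst (JGen v t) = ffilter is_wit {|v|} |\<union>| witst t"

fun wits :: "fm \<Rightarrow> var fset" where
  "wits (Pred P xs) = ffilter is_wit (fset_of_list xs)"
| "wits Bot = {||}"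
| "wits (Imp p q) = wits p |\<union>| wits q"
| "wits (All x p) = ffilter is_wit {|x|} |\<union>| wits p"
| "wits (Just t X p) = witst t |\<union>| ffilter is_wit X |\<union>| wits p"

fun henkin_tm :: "jt \<Rightarrow> bool" where
  "henkin_tm (JV n) = True"
| "henkin_tm (JC n) = True"
| "henkin_tm (JApp t s) = (henkin_tm t \<and> henkin_tm s)"
| "henkin_tm (JSum t s) = (henkin_tm t \<and> henkin_tm s)"
| "henkin_tm (JBang t) = henkin_tm t"
| "henkin_tm (JB t) = henkin_tm t"
| "henkin_tm (JGen v t) = (\<not> is_wit v \<and> henkin_tm t)"

text \<open>Henkin formulas: witness variables are never quantified nor gen-subscripts, and they
  always occur free (so every witness variable occurring inside t:_X psi belongs to X).\<close>
fun henkin :: "fm \<Rightarrow> bool" where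
  "henkin (Pred P xs) = True"
| "henkin Bot = True"
| "henkin (Imp p q) = (henkin p \<and> henkin q)"
| "henkin (All x p) = (\<not> is_wit x \<and> henkin p)"
| "henkin (Just t X p) = (henkin_tm t \<and> henkin p \<and> wits p |\<subseteq>| X)"

text \<open>Basic formulas (Fml_J): no witness variables at all.\<close>
definition basic :: "fm \<Rightarrow> bool" where "basic p \<longleftrightarrow> wits p = {||}"

fun substs :: "(var \<Rightarrow> var) \<Rightarrow> fm \<Rightarrow> fm" where
  "substs r (Pred P xs) = Pred P (map r xs)"
| "substs r Bot = Bot"
| "substs r (Imp p q) = Imp (substs r p) (substs r q)"
| "substs r (All z p) = All z (substs (r(z := z)) p)"
| "substs r (Just t X p) = Just t (fimage r X) (substs (\<lambda>v. if v |\<in>| X then r v else v) p)"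

definition subst :: "var \<Rightarrow> var \<Rightarrow> fm \<Rightarrow> fm" where
  "subst x y p = substs (id(x := y)) p"

text \<open>y is free for x in p (no capture by quantifiers or by the local variables of
  a justification formula t:_X psi, i.e. those free in psi but not in X).\<close>
fun freefor :: "var \<Rightarrow> var \<Rightarrow> fm \<Rightarrow> bool" where
  "freefor x y (Pred P xs) = True"
| "freefor x y Bot = True"
| "freefor x y (Imp p q) = (freefor x y p \<and> freefor x y q)"
| "freefor x y (All z p) = (x \<notin> fv (All z p) \<or> (z \<noteq> y \<and> freefor x y p))"
| "freefor x y (Just t X p) = (x |\<notin>| X \<or> ((y \<in> fv p \<longrightarrow> y |\<in>| X) \<and> freefor x y p))"

fun rename_tm :: "(var \<Rightarrow> var) \<Rightarrow> jt \<Rightarrow> jt" where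
  "rename_tm r (JV n) = JV n"
| "rename_tm r (JC n) = JC n"
| "rename_tm r (JApp t s) = JApp (rename_tm r t) (rename_tm r s)"
| "rename_tm r (JSum t s) = JSum (rename_tm r t) (rename_tm r s)"
| "rename_tm r (JBang t) = JBang (rename_tm r t)"
| "rename_tm r (JB t) = JB (rename_tm r t)"
| "rename_tm r (JGen v t) = JGen (r v) (rename_tm r t)"

fun rename :: "(var \<Rightarrow> var) \<Rightarrow> fm \<Rightarrow> fm" where
  "rename r (Pred P xs) = Pred P (map r xs)"
| "rename r Bot = Bot"
| "rename r (Imp p q) = Imp (rename r p) (rename r q)"
| "rename r (All z p) = All (r z) (rename r p)"
| "rename r (Just t X p) = Just (rename_tm r t) (fimage r X) (rename r p)"

definition variant :: "fm \<Rightarrow> fm \<Rightarrow> bool" where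
  "variant A B \<longleftrightarrow> (\<exists>\<sigma>::nat \<Rightarrow> nat. inj \<sigma> \<and>
      B = rename (\<lambda>v. case v of BV n \<Rightarrow> BV (\<sigma> n) | WV n \<Rightarrow> WV n) A)"

inductive axiom :: "fm \<Rightarrow> bool" where
  A1_K: "axiom (Imp p (Imp q p))"
| A1_S: "axiom (Imp (Imp p (Imp q r)) (Imp (Imp p q) (Imp p r)))"
| A1_DN: "axiom (Imp (Neg (Neg p)) p)"
| A1_inst: "freefor x y p \<Longrightarrow> axiom (Imp (All x p) (subst x y p))"
| A1_dist: "x \<notin> fv p \<Longrightarrow> axiom (Imp (All x (Imp p q)) (Imp p (All x q)))"
| A2: "y \<notin> fv p \<Longrightarrow> axiom (Imp (Just t (finsert y X) p) (Just t X p))"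
| A3: "axiom (Imp (Just t X p) (Just t (finsert y X) p))"
| B1: "axiom (Imp (Just t X p) p)"
| B2: "axiom (Imp (Just t X (Imp p q)) (Imp (Just s X p) (Just (JApp t s) X q)))"
| B3l: "axiom (Imp (Just t X p) (Just (JSum t s) X p))"
| B3r: "axiom (Imp (Just s X p) (Just (JSum t s) X p))"
| B4: "axiom (Imp (Just t X p) (Just (JBang t) X (Just t X p)))"
| B5: "x |\<notin>| X \<Longrightarrow> axiom (Imp (Just t X p) (Just (JGen x t) X (All x p)))"
| Bb: "y |\<notin>| X \<Longrightarrow> axiom (Imp (All y (Just t (finsert y X) p)) (Just (JB t) X (All y p)))"

definition const_spec :: "fm set \<Rightarrow> bool" where
  "const_spec CS \<longleftrightarrow> (\<forall>f\<in>CS. \<exists>c A. f = Just (JC c) {||} A \<and> basic A \<and> axiom A)"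

definition axiomatically_appropriate :: "fm set \<Rightarrow> bool" where
  "axiomatically_appropriate CS \<longleftrightarrow>
     (\<forall>A. basic A \<and> axiom A \<longrightarrow> (\<exists>c. Just (JC c) {||} A \<in> CS))"

definition variant_closed :: "fm set \<Rightarrow> bool" where
  "variant_closed CS \<longleftrightarrow>
     (\<forall>c A B. Just (JC c) {||} A \<in> CS \<and> variant A B \<longrightarrow> Just (JC c) {||} B \<in> CS)"

text \<open>CS(V): replace some free basic variables of A by distinct witness variables; the
  witness variables (which always count as free) are recorded in the subscript.\<close>
definition CSV :: "fm set \<Rightarrow> fm set" where
  "CSV CS = {Just (JC c) (wits B) B | c A B. Just (JC c) {||} A \<in> CS \<and>
      (\<exists>r. (\<forall>v. r v \<noteq> v \<longrightarrow> v \<in> fv A \<and> \<not> is_wit v \<and> is_wit (r v))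
           \<and> inj_on r {v. r v \<noteq> v} \<and> B = substs r A)}"

text \<open>derives CS H p: p is derivable using exactly the (finitely many) hypotheses H;
  generalization is allowed on basic variables not free in the hypotheses used.\<close>
inductive derives :: "fm set \<Rightarrow> fm set \<Rightarrow> fm \<Rightarrow> bool" for CS where
  hyp: "derives CS {p} p"
| ax: "axiom p \<Longrightarrow> henkin p \<Longrightarrow> derives CS {} p"
| cs: "p \<in> CSV CS \<Longrightarrow> derives CS {} p"
| mp: "derives CS H1 (Imp p q) \<Longrightarrow> derives CS H2 p \<Longrightarrow> derives CS (H1 \<union> H2) q"
| gen: "derives CS H p \<Longrightarrow> \<not> is_wit x \<Longrightarrow> (\<forall>h\<in>H. x \<notin> fv h) \<Longrightarrow> derives CS H (All x p)"

definition provable :: "fm set \<Rightarrow> fm set \<Rightarrow> fm \<Rightarrow> bool" where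
  "provable CS \<Gamma> p \<longleftrightarrow> (\<exists>H. H \<subseteq> \<Gamma> \<and> derives CS H p)"

definition consistent :: "fm set \<Rightarrow> fm set \<Rightarrow> bool" where
  "consistent CS \<Gamma> \<longleftrightarrow> \<not> provable CS \<Gamma> Bot"

datatype tmpl = TL nat | TNeg tmpl | TOr tmpl tmpl | TAnd tmpl tmpl | TBox tmpl

fun letters :: "tmpl \<Rightarrow> nat list" where
  "letters (TL i) = [i]"
| "letters (TNeg G) = letters G"
| "letters (TOr G H) = letters G @ letters H"
| "letters (TAnd G H) = letters G @ letters H"
| "letters (TBox G) = letters G"

definition template :: "tmpl \<Rightarrow> bool" where
  "template F \<longleftrightarrow> distinct (letters F)"

fun disjunctive :: "tmpl \<Rightarrow> bool" where
  "disjunctive (TL i) = True"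
| "disjunctive (TNeg G) = False"
| "disjunctive (TOr G H) = (disjunctive G \<and> disjunctive H)"
| "disjunctive (TAnd G H) = False"
| "disjunctive (TBox G) = disjunctive G"

fun inst :: "(nat \<Rightarrow> fm) \<Rightarrow> tmpl \<Rightarrow> fm set" where
  "inst \<chi> (TL i) = {\<chi> i}"
| "inst \<chi> (TNeg G) = Neg ` inst \<chi> G"
| "inst \<chi> (TOr G H) = {Or p q | p q. p \<in> inst \<chi> G \<and> q \<in> inst \<chi> H}"
| "inst \<chi> (TAnd G H) = {And p q | p q. p \<in> inst \<chi> G \<and> q \<in> inst \<chi> H}"
| "inst \<chi> (TBox G) = {Just t (wits p) p | t p. henkin_tm t \<and> p \<in> inst \<chi> G}"

end

theory Submission
  imports Defs
begin

text \<open>Suppose \<open>\<Gamma>\<close> together with the negated instances of \<open>F\<close> at \<open>\<phi>(a)\<close> were inconsistent.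
  A derivation of \<open>\<bottom>\<close> uses only finitely many negated instances \<open>\<not>\<psi>\<^sub>1, \<dots>, \<not>\<psi>\<^sub>n\<close>. Since \<open>F\<close> is
  disjunctive, all \<open>\<psi>\<^sub>k\<close> provably imply a single instance \<open>\<psi>\<close> (disjuncts are merged
  componentwise, boxes by internalising the implications and summing the terms), so \<open>\<Gamma> \<turnstile> \<psi>\<close>.
  As \<open>a\<close> does not occur in the basic formulas of \<open>\<Gamma>\<close>, it can be replaced throughout that
  derivation by a fresh basic variable \<open>y\<close>, which may then be generalised: \<open>\<Gamma> \<turnstile> \<forall>y \<psi>[a:=y]\<close>.
  Finally \<open>\<forall>y \<psi>[a:=y]\<close> implies an instance of \<open>F\<close> at \<open>\<forall>x\<phi>\<close>: the quantifier passes into the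
  disjunct containing \<open>q\<close> (the others do not mention \<open>y\<close>), through boxes by axiom Bb, and at \<open>q\<close>
  itself \<open>\<forall>y \<phi>(y)\<close> is an alphabetic variant of \<open>\<forall>x \<phi>(x)\<close>. This contradicts the consistency of
  \<open>\<Gamma>\<close> with the negated instances at \<open>\<forall>x\<phi>\<close>.\<close>

section \<open>Variables of formulas\<close>

fun allvars_tm :: "jt \<Rightarrow> var set" where
  "allvars_tm (JV n) = {}"
| "allvars_tm (JC n) = {}"
| "allvars_tm (JApp t s) = allvars_tm t \<union> allvars_tm s"
| "allvars_tm (JSum t s) = allvars_tm t \<union> allvars_tm s"
| "allvars_tm (JBang t) = allvars_tm t"
| "allvars_tm (JB t) = allvars_tm t"
| "allvars_tm (JGen v t) = insert v (allvars_tm t)"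

fun allvars :: "fm \<Rightarrow> var set" where
  "allvars (Pred P xs) = set xs"
| "allvars Bot = {}"
| "allvars (Imp p q) = allvars p \<union> allvars q"
| "allvars (All x p) = insert x (allvars p)"
| "allvars (Just t X p) = allvars_tm t \<union> fset X \<union> allvars p"

lemma finite_allvars_tm[simp]: "finite (allvars_tm t)" by (induction t) auto

lemma finite_allvars[simp]: "finite (allvars p)" by (induction p) auto

lemma fv_subset_allvars: "fv p \<subseteq> allvars p" by (induction p) auto

lemma wit_in_witst_iff: "is_wit v \<Longrightarrow> (v |\<in>| witst t) = (v \<in> allvars_tm t)"
  by (induction t) auto

lemma wit_in_wits_iff: "is_wit v \<Longrightarrow> (v |\<in>| wits p) = (v \<in> allvars p)"
  by (induction p) (auto simp: wit_in_witst_iff fset_of_list.rep_eq)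

lemma is_wit_if_in_wits: "v |\<in>| wits p \<Longrightarrow> is_wit v"
proof (induction p)
  case (Just t X p) then show ?case
    by (induction t) auto
qed auto

lemma wit_in_wits_if_in_fv: "is_wit v \<Longrightarrow> v \<in> fv p \<Longrightarrow> v |\<in>| wits p"
  by (induction p) (auto simp: fset_of_list.rep_eq)

lemma ffilter_wits[simp]: "ffilter is_wit (wits p) = wits p"
  by (rule fset_eqI) (auto dest: is_wit_if_in_wits)

lemma henkin_tm_witst_empty: "henkin_tm t \<Longrightarrow> witst t = {||}"
  by (induction t) auto

lemma henkin_tm_allvars_not_wit: "henkin_tm t \<Longrightarrow> v \<in> allvars_tm t \<Longrightarrow> \<not> is_wit v"
  by (induction t) auto

lemma witst_empty_henkin_tm: "witst t = {||} \<Longrightarrow> henkin_tm t"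
  by (induction t) (auto simp: sup_eq_bot_iff)

lemma wits_empty_henkin: "wits p = {||} \<Longrightarrow> henkin p"
  by (induction p) (auto simp: sup_eq_bot_iff witst_empty_henkin_tm)

lemma henkin_wit_in_fv: "henkin p \<Longrightarrow> v |\<in>| wits p \<Longrightarrow> v \<in> fv p"
  by (induction p) (auto simp: henkin_tm_witst_empty fset_of_list.rep_eq dest: is_wit_if_in_wits)

lemma henkin_wit_notin_allvars: "henkin p \<Longrightarrow> is_wit a \<Longrightarrow> a \<notin> fv p \<Longrightarrow> a \<notin> allvars p"
  using henkin_wit_in_fv wit_in_wits_iff by blast

lemma Neg_eq_iff[simp]: "Neg p = Neg q \<longleftrightarrow> p = q" by (simp add: Neg_def)

lemma Or_eq_iff[simp]: "Or p q = Or p' q' \<longleftrightarrow> p = p' \<and> q = q'" by (simp add: Or_def Neg_def)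

lemma inj_Neg: "inj Neg" by (simp add: inj_def)

lemma henkin_Neg[simp]: "henkin (Neg p) = henkin p" by (simp add: Neg_def)

lemma henkin_Or[simp]: "henkin (Or p q) = (henkin p \<and> henkin q)" by (simp add: Or_def)

lemma wits_Neg[simp]: "wits (Neg p) = wits p" by (simp add: Neg_def)

lemma wits_Or[simp]: "wits (Or p q) = wits p |\<union>| wits q" by (simp add: Or_def Neg_def)

lemma fv_Neg[simp]: "fv (Neg p) = fv p" by (simp add: Neg_def)

lemma fv_Or[simp]: "fv (Or p q) = fv p \<union> fv q" by (simp add: Or_def Neg_def)

lemma allvars_Neg[simp]: "allvars (Neg p) = allvars p" by (simp add: Neg_def)

lemma allvars_Or[simp]: "allvars (Or p q) = allvars p \<union> allvars q" by (simp add: Or_def Neg_def)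

lemma rename_Neg[simp]: "rename r (Neg p) = Neg (rename r p)" by (simp add: Neg_def)

lemma rename_Or[simp]: "rename r (Or p q) = Or (rename r p) (rename r q)" by (simp add: Or_def Neg_def)

lemma eventually_cofinite_notin: "finite A \<Longrightarrow> (\<And>y. y \<notin> A \<Longrightarrow> P y) \<Longrightarrow> \<forall>\<^sub>F y in cofinite. P y"
  unfolding eventually_cofinite by (auto intro: finite_subset)

lemma ex_basic_if_eventually_cofinite:
  assumes "\<forall>\<^sub>F y in cofinite. P y"
  shows "\<exists>y. \<not> is_wit y \<and> P y"
proof -
  have "finite {y. \<not> P y}" using assms by (simp add: eventually_cofinite)
  moreover have "infinite (range BV)" using finite_imageD[of BV UNIV] by (auto simp: inj_def)
  ultimately have "\<not> range BV \<subseteq> {y. \<not> P y}" using finite_subset by blast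
  then obtain n where "P (BV n)" by auto
  then show ?thesis by (intro exI[of _ "BV n"]) simp
qed

section \<open>Substitution and renaming\<close>

lemma rename_tm_id: "(\<forall>v\<in>allvars_tm t. r v = v) \<Longrightarrow> rename_tm r t = t"
  by (induction t) auto

lemma rename_id: "(\<forall>v\<in>allvars p. r v = v) \<Longrightarrow> rename r p = p"
  by (induction p) (auto simp: rename_tm_id map_idI fset_eqI)

lemma substs_id: "(\<forall>v\<in>allvars p. s v = v) \<Longrightarrow> substs s p = p"
proof (induction p arbitrary: s)
  case (Pred P xs) then show ?case by (simp add: map_idI)
next
  case (All z p) then show ?case by simp
next
  case (Just t X p)
  have "s |`| X = X" using Just.prems by (intro fset_eqI) (auto simp: rev_image_eqI)
  moreover have "substs (\<lambda>v. if v |\<in>| X then s v else v) p = p"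
    using Just by auto
  ultimately show ?case by simp
qed auto

lemma allvars_substs: "allvars (substs s p) \<subseteq> allvars p \<union> s ` allvars p"
proof (induction p arbitrary: s)
  case (All z p)
  have "allvars (substs (s(z:=z)) p) \<subseteq> allvars p \<union> (s(z:=z)) ` allvars p" by (rule All.IH)
  also have "\<dots> \<subseteq> insert z (allvars p) \<union> s ` insert z (allvars p)" by auto
  finally show ?case by auto
next
  case (Just t X p)
  let ?si = "\<lambda>v. if v |\<in>| X then s v else v"
  have "allvars (substs ?si p) \<subseteq> allvars p \<union> ?si ` allvars p" by (rule Just.IH)
  also have "\<dots> \<subseteq> allvars p \<union> s ` (fset X \<union> allvars p)" by auto
  finally show ?case by auto
next
  case (Imp p q)
  have "allvars (substs s p) \<subseteq> allvars p \<union> s ` allvars p" "allvars (substs s q) \<subseteq> allvars q \<union> s ` allvars q"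
    using Imp.IH by auto
  then show ?case by auto
qed auto

lemma fv_substs: "fv (substs s p) \<subseteq> s ` fv p"
proof (induction p arbitrary: s)
  case (All z p)
  have "fv (substs (s(z:=z)) p) \<subseteq> (s(z:=z)) ` fv p" by (rule All.IH)
  then show ?case by auto
next
  case (Imp p q)
  have "fv (substs s p) \<subseteq> s ` fv p" "fv (substs s q) \<subseteq> s ` fv q"
    using Imp.IH by auto
  then show ?case by auto
qed auto

lemma wits_substs: "fset (wits (substs s p)) \<subseteq> fset (wits p) \<union> s ` {v \<in> allvars p. s v \<noteq> v}"
proof (induction p arbitrary: s)
  case (All z p)
  have "fset (wits (substs (s(z:=z)) p)) \<subseteq> fset (wits p) \<union> (s(z:=z)) ` {v \<in> allvars p. (s(z:=z)) v \<noteq> v}"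
    by (rule All.IH)
  then show ?case by (force simp: image_iff)
next
  case (Imp p q)
  then show ?case by (fastforce simp: image_iff)
next
  case (Just t X p)
  let ?si = "\<lambda>v. if v |\<in>| X then s v else v"
  have "fset (wits (substs ?si p)) \<subseteq> fset (wits p) \<union> ?si ` {v \<in> allvars p. ?si v \<noteq> v}"
    by (rule Just.IH)
  then show ?case by (auto simp: image_iff split: if_splits)
qed (auto simp: fset_of_list.rep_eq)

lemma henkin_substs: "henkin p \<Longrightarrow> \<forall>v. s v \<noteq> v \<longrightarrow> \<not> is_wit v \<Longrightarrow> henkin (substs s p)"
proof (induction p arbitrary: s)
  case (Just t X p)
  let ?si = "\<lambda>v. if v |\<in>| X then s v else v"
  have "fset (wits (substs ?si p)) \<subseteq> fset (wits p) \<union> ?si ` {v \<in> allvars p. ?si v \<noteq> v}"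
    by (rule wits_substs)
  moreover have "fset (wits p) \<subseteq> fset X" "\<forall>w\<in>fset (wits p). s w = w"
    using Just.prems is_wit_if_in_wits by (auto simp: less_eq_fset.rep_eq)
  ultimately have "fset (wits (substs ?si p)) \<subseteq> s ` fset X" by (force split: if_splits)
  then show ?case using Just by (auto simp: less_eq_fset.rep_eq)
qed auto

lemma fv_rename: "inj_on r (allvars p) \<Longrightarrow> fv (rename r p) = r ` fv p"
proof (induction p)
  case (All z p)
  then have "fv (rename r p) = r ` fv p" by simp
  moreover have "r ` (fv p - {z}) = r ` fv p - {r z}"
    using All.prems fv_subset_allvars[of p] by (auto simp: inj_on_def)
  ultimately show ?case by simp
qed (auto simp: inj_on_Un)

lemma notin_fv_rename:
  "inj_on r (insert x (allvars p)) \<Longrightarrow> x \<notin> fv p \<Longrightarrow> r x \<notin> fv (rename r p)"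
  using fv_rename[of r p] fv_subset_allvars[of p] by (auto simp: inj_on_def)

lemma wits_rename: "(\<forall>v. \<not> is_wit v \<longrightarrow> \<not> is_wit (r v)) \<Longrightarrow> fset (wits (rename r p)) \<subseteq> r ` fset (wits p)"
proof (induction p)
  case (Pred P xs) then show ?case by (auto simp: fset_of_list.rep_eq)
next
  case (Just t X p)
  have "fset (witst (rename_tm r t)) \<subseteq> r ` fset (witst t)" using Just.prems
    by (induction t) auto
  then show ?case using Just by auto
qed auto

lemma wits_rename_upd:
  assumes "is_wit a" and "\<not> is_wit y"
  shows "fset (wits (rename (id(a:=y)) p)) \<subseteq> fset (wits p) - {a}"
proof
  fix w assume w: "w \<in> fset (wits (rename (id(a:=y)) p))"
  have "fset (wits (rename (id(a:=y)) p)) \<subseteq> id(a:=y) ` fset (wits p)"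
    using assms by (intro wits_rename) auto
  then obtain u where "u \<in> fset (wits p)" "w = (id(a:=y)) u" using w by blast
  moreover have "is_wit w" using w is_wit_if_in_wits by simp
  ultimately show "w \<in> fset (wits p) - {a}" using assms by (auto split: if_splits)
qed

lemma wits_rename_basic: "\<forall>v. \<not> is_wit (\<rho> v) \<Longrightarrow> wits (rename \<rho> A) = {||}"
  using wits_rename[of \<rho> A] is_wit_if_in_wits by fastforce

lemma henkin_tm_rename: "henkin_tm t \<Longrightarrow> (\<forall>v. \<not> is_wit v \<longrightarrow> \<not> is_wit (r v)) \<Longrightarrow> henkin_tm (rename_tm r t)"
  by (induction t) auto

lemma henkin_rename: "henkin p \<Longrightarrow> (\<forall>v. \<not> is_wit v \<longrightarrow> \<not> is_wit (r v)) \<Longrightarrow> henkin (rename r p)"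
proof (induction p)
  case (Just t X p)
  have "fset (wits (rename r p)) \<subseteq> r ` fset (wits p)" using Just.prems by (intro wits_rename) auto
  also have "\<dots> \<subseteq> r ` fset X" using Just.prems by (auto simp: less_eq_fset.rep_eq)
  finally show ?case using Just by (auto simp: less_eq_fset.rep_eq henkin_tm_rename)
qed auto

lemma rename_substs:
  "inj_on r (allvars p) \<Longrightarrow> \<forall>v\<in>allvars p. s' (r v) = r (s v) \<Longrightarrow>
   rename r (substs s p) = substs s' (rename r p)"
proof (induction p arbitrary: s s')
  case (All z p)
  have "rename r (substs (s(z:=z)) p) = substs (s'(r z := r z)) (rename r p)"
    using All.prems by (intro All.IH) (auto simp: inj_on_def)
  then show ?case by simp
next
  case (Just t X p)
  have "rename r (substs (\<lambda>v. if v |\<in>| X then s v else v) p)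
      = substs (\<lambda>v. if v |\<in>| r |`| X then s' v else v) (rename r p)"
    using Just.prems by (intro Just.IH) (auto simp: inj_on_def)
  moreover have "r |`| (s |`| X) = s' |`| (r |`| X)"
    using Just.prems(2) by (intro fset_eqI) (auto simp: image_iff)
  ultimately show ?case by simp
qed (auto simp: inj_on_Un)

lemma substs_comp:
  "wits p = {||} \<Longrightarrow> \<forall>v. s v \<noteq> v \<longrightarrow> is_wit (s v) \<Longrightarrow> \<forall>w. is_wit w \<longrightarrow> t w = w \<Longrightarrow>
   substs t (substs s p) = substs (t \<circ> s) p"
proof (induction p arbitrary: s t)
  case (All z p)
  have "\<not> is_wit z" using All.prems(1) wit_in_wits_iff[of z "All z p"] by auto
  then have "t(z:=z) \<circ> s(z:=z) = (t \<circ> s)(z:=z)" using All.prems(2) by (auto simp: fun_eq_iff)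
  moreover have "substs (t(z:=z)) (substs (s(z:=z)) p) = substs (t(z:=z) \<circ> s(z:=z)) p"
    using All.prems by (intro All.IH) (auto simp: sup_eq_bot_iff)
  ultimately show ?case by (simp add: comp_def)
next
  case (Just u X p)
  let ?si = "\<lambda>v. if v |\<in>| X then s v else v"
  let ?ti = "\<lambda>v. if v |\<in>| s |`| X then t v else v"
  have ti_id: "?ti v = v" if "v |\<notin>| X" for v
  proof (cases "v |\<in>| s |`| X")
    case True
    then obtain w where "w |\<in>| X" "v = s w" by auto
    then have "is_wit v" using that Just.prems(2) by metis
    then show ?thesis using Just.prems(3) by simp
  qed simp
  have "?ti \<circ> ?si = (\<lambda>v. if v |\<in>| X then t (s v) else v)"
  proof
    fix v show "(?ti \<circ> ?si) v = (if v |\<in>| X then t (s v) else v)"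
      using ti_id[of v] by (cases "v |\<in>| X") auto
  qed
  moreover have "substs ?ti (substs ?si p) = substs (?ti \<circ> ?si) p"
    using Just.prems by (intro Just.IH) (auto simp: sup_eq_bot_iff)
  ultimately show ?case by (simp add: fimage_fimage comp_def)
qed (auto simp: sup_eq_bot_iff)

lemma substs_upd_notin_fv: "x \<notin> fv p \<Longrightarrow> substs (id(x:=z)) p = p"
proof (induction p)
  case (All w p)
  show ?case
  proof (cases "w = x")
    case True then show ?thesis by (simp add: substs_id)
  next
    case False
    have e: "(id(x:=z))(w:=w) = id(x:=z)" using False by auto
    have "substs (id(x:=z)) p = p" using All False by (simp add: fun_upd_def id_def)
    then show ?thesis by (simp only: substs.simps e)
  qed
next
  case (Just t X p)
  have "(\<lambda>v. if v |\<in>| X then (if v = x then z else v) else v) = id" using Just.prems by auto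
  moreover have "(\<lambda>a. if a = x then z else a) |`| X = X" using Just.prems by (intro fset_eqI) (auto simp: image_iff)
  ultimately show ?case by (simp add: substs_id)
qed (auto simp: map_idI)

lemma in_allvars_substs_upd: "x \<in> fv p \<Longrightarrow> z \<in> allvars (substs (id(x:=z)) p)"
proof (induction p)
  case (All w p)
  then have "w \<noteq> x" by auto
  then have e: "(id(x:=z))(w:=w) = id(x:=z)" by auto
  have "z \<in> allvars (substs (id(x:=z)) p)" using All \<open>w \<noteq> x\<close> by (simp add: fun_upd_def id_def)
  then show ?case by (simp only: substs.simps e allvars.simps) simp
qed auto

lemma notin_fv_substs_upd: "x \<noteq> y \<Longrightarrow> x \<notin> fv (substs (id(x:=y)) p)"
  using fv_substs[of "id(x:=y)" p] by auto

lemma substs_upd_upd_fresh: "y \<notin> allvars p \<Longrightarrow> substs (id(y:=x)) (substs (id(x:=y)) p) = p"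
proof (induction p)
  case (Pred P xs) then show ?case by (auto intro: map_idI)
next
  case (All z p)
  show ?case
  proof (cases "z = x")
    case True
    then have "substs (id(y:=x)) (substs (id(x:=y)) (All z p)) = All z (substs ((id(y:=x))(x:=x)) p)"
      by (simp add: substs_id)
    also have "substs ((id(y:=x))(x:=x)) p = p" using All.prems by (intro substs_id) auto
    finally show ?thesis .
  next
    case False
    have "z \<noteq> y" using All.prems by auto
    have e1: "(id(x:=y))(z:=z) = id(x:=y)" using False by auto
    have e2: "(id(y:=x))(z:=z) = id(y:=x)" using \<open>z \<noteq> y\<close> by auto
    have "substs (id(y:=x)) (substs (id(x:=y)) p) = p" by (rule All.IH) (use All.prems in auto)
    then show ?thesis by (simp only: substs.simps e1 e2)
  qed
next
  case (Just t X p)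
  show ?case
  proof (cases "x |\<in>| X")
    case True
    have yX: "y |\<notin>| X" using Just.prems by auto
    have f1: "(\<lambda>v. if v |\<in>| X then (id(x:=y)) v else v) = id(x:=y)" using True by (intro ext) auto
    have f2: "(\<lambda>v. if v |\<in>| id(x:=y) |`| X then (id(y:=x)) v else v) = id(y:=x)"
      using True by (auto simp: fun_eq_iff)
    have X3: "id(y:=x) |`| (id(x:=y) |`| X) = X" using True yX by (auto simp: fimage_iff fset_eq_iff)
    have "substs (id(y:=x)) (substs (id(x:=y)) p) = p" by (rule Just.IH) (use Just.prems in auto)
    then show ?thesis using f1 f2 X3 by (simp only: substs.simps)
  next
    case False
    have yX: "y |\<notin>| X" using Just.prems by auto
    have f1: "(\<lambda>v. if v |\<in>| X then (id(x:=y)) v else v) = id" using False by auto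
    have X1: "id(x:=y) |`| X = X" using False by (auto simp: fset_eq_iff fimage_iff) 
    have f2: "(\<lambda>v. if v |\<in>| X then (id(y:=x)) v else v) = id" using yX by auto
    have X2: "id(y:=x) |`| X = X" using yX by (auto simp: fset_eq_iff fimage_iff)
    have "substs id p = p" by (simp add: substs_id)
    then show ?thesis using f1 f2 X1 X2 by (simp only: substs.simps)
  qed
qed auto

lemma freefor_fresh: "y \<notin> allvars p \<Longrightarrow> freefor x y p"
  using fv_subset_allvars by (induction p) auto

lemma freefor_self: "freefor x x p"
  by (induction p) auto

lemma freefor_rename:
  "freefor x z p \<Longrightarrow> inj_on r (insert x (insert z (allvars p))) \<Longrightarrow> freefor (r x) (r z) (rename r p)"
proof (induction p)
  case (Imp p q) then show ?case by (auto intro: inj_on_subset)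
next
  case (All w p)
  have "fv (rename r (All w p)) = r ` fv (All w p)"
    using All.prems(2) by (intro fv_rename) (auto intro: inj_on_subset)
  moreover have "freefor (r x) (r z) (rename r p)" if "freefor x z p"
    using that All.prems(2) by (intro All.IH) (auto intro: inj_on_subset)
  ultimately show ?case
    using All.prems fv_subset_allvars[of "All w p"] by (auto simp: inj_on_def)
next
  case (Just t X p)
  have "fv (rename r p) = r ` fv p" using Just.prems(2) by (intro fv_rename) (auto intro: inj_on_subset)
  moreover have "freefor (r x) (r z) (rename r p)" if "freefor x z p"
    using that Just.prems(2) by (intro Just.IH) (auto intro: inj_on_subset)
  ultimately show ?case
    using Just.prems fv_subset_allvars[of p] by (auto simp: inj_on_def)
qed auto

lemma freefor_substs_upd_fresh: "y \<notin> allvars p \<Longrightarrow> x \<noteq> y \<Longrightarrow> freefor y x (substs (id(x:=y)) p)"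
proof (induction p)
  case (All z p)
  show ?case
  proof (cases "z = x")
    case True
    have e: "(id(x:=y))(z:=z) = id" using True by auto
    have "substs (id(x:=y)) (All z p) = All z (substs id p)" by (simp only: substs.simps e)
    also have "\<dots> = All z p" by (simp add: substs_id)
    finally have eq: "substs (id(x:=y)) (All z p) = All z p" .
    show ?thesis unfolding eq using True All.prems fv_subset_allvars[of p] by auto
  next
    case False
    have e1: "(id(x:=y))(z:=z) = id(x:=y)" using False by auto
    have "freefor y x (substs (id(x:=y)) p)" by (rule All.IH) (use All.prems in auto)
    then have "freefor y x (All z (substs (id(x:=y)) p))" using False by simp
    then show ?thesis by (simp only: substs.simps e1)
  qed
next
  case (Just t X p)
  show ?case
  proof (cases "x |\<in>| X")
    case True
    have f1: "(\<lambda>v. if v |\<in>| X then (id(x:=y)) v else v) = id(x:=y)" using True by (intro ext) auto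
    have "freefor y x (substs (id(x:=y)) p)" by (rule Just.IH) (use Just.prems in auto)
    moreover have "x \<notin> fv (substs (id(x:=y)) p)" using notin_fv_substs_upd Just.prems by blast
    ultimately have "freefor y x (Just t (id(x:=y) |`| X) (substs (id(x:=y)) p))" by simp
    then show ?thesis using f1 by (simp only: substs.simps)
  next
    case False
    have yX: "y |\<notin>| X" using Just.prems by auto
    have f1: "(\<lambda>v. if v |\<in>| X then (id(x:=y)) v else v) = id" using False by auto
    have X1: "id(x:=y) |`| X = X" using False by (auto simp: fset_eq_iff fimage_iff)
    have "freefor y x (Just t X (substs id p))" using yX by simp
    then show ?thesis using f1 X1 by (simp only: substs.simps)
  qed
qed auto

lemma rename_subst:
  assumes "inj_on r (insert x (insert y (allvars p)))"
  shows "rename r (subst x y p) = subst (r x) (r y) (rename r p)"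
proof -
  have "rename r (substs (id(x:=y)) p) = substs (id(r x := r y)) (rename r p)"
  proof (rule rename_substs)
    show "inj_on r (allvars p)" using assms by (auto intro: inj_on_subset)
    show "\<forall>v\<in>allvars p. (id(r x := r y)) (r v) = r ((id(x:=y)) v)"
      using assms by (auto simp: inj_on_def)
  qed
  then show ?thesis by (simp add: subst_def)
qed

lemma rename_upd_subst_fresh: "a \<notin> allvars \<phi> \<Longrightarrow> rename (id(a:=y)) (subst x a \<phi>) = subst x y \<phi>"
proof -
  assume a: "a \<notin> allvars \<phi>"
  have inj: "inj_on (id(a:=y)) (allvars \<phi>)" using a by (auto simp: inj_on_def)
  have "rename (id(a:=y)) (substs (id(x:=a)) \<phi>) = substs (id(x:=y)) (rename (id(a:=y)) \<phi>)"
  proof (rule rename_substs[OF inj])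
    show "\<forall>v\<in>allvars \<phi>. (id(x:=y)) ((id(a:=y)) v) = (id(a:=y)) ((id(x:=a)) v)"
      using a by auto
  qed
  moreover have "rename (id(a:=y)) \<phi> = \<phi>" using a by (intro rename_id) auto
  ultimately show ?thesis by (simp add: subst_def)
qed

lemma rename_substs_wit_eq_subst:
  assumes A: "wits A = {||}" and s: "\<forall>v. s v \<noteq> v \<longrightarrow> \<not> is_wit v \<and> is_wit (s v)"
    and s_inj: "inj_on s {v. s v \<noteq> v}" and v0: "s v0 = a" "\<not> is_wit v0" and a: "is_wit a"
  shows "rename (id(a:=y)) (substs s A) = subst v0 y (substs (s(v0:=v0)) A)"
proof -
  let ?r = "id(a:=y)" and ?s0 = "s(v0:=v0)"
  have a_A: "a \<notin> allvars A" using wit_in_wits_iff[OF a] A by auto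
  have "rename ?r (substs s A) = substs (id(v0:=y) \<circ> ?s0) (rename ?r A)"
  proof (rule rename_substs)
    show "inj_on ?r (allvars A)" using a_A by (auto simp: inj_on_def)
    show "\<forall>v\<in>allvars A. (id(v0:=y) \<circ> ?s0) (?r v) = ?r (s v)"
    proof
      fix v assume "v \<in> allvars A"
      then have "v \<noteq> a" using a_A by auto
      moreover have "s v \<noteq> v0 \<and> s v \<noteq> a" if "v \<noteq> v0"
      proof
        show "s v \<noteq> v0" using s v0(2) that by metis
        show "s v \<noteq> a"
        proof
          assume "s v = a"
          then have "s v \<noteq> v" "s v0 \<noteq> v0" using \<open>v \<noteq> a\<close> v0 a by auto
          then show False using s_inj v0(1) \<open>s v = a\<close> that by (auto simp: inj_on_def)
        qed
      qed
      ultimately show "(id(v0:=y) \<circ> ?s0) (?r v) = ?r (s v)" using v0 by auto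
    qed
  qed
  also have "rename ?r A = A" using a_A by (intro rename_id) auto
  also have "substs (id(v0:=y) \<circ> ?s0) A = subst v0 y (substs ?s0 A)"
    unfolding subst_def using A s v0(2) by (intro substs_comp[symmetric]) auto
  finally show ?thesis .
qed

lemma substs_rename_inv:
  "henkin p \<Longrightarrow> \<forall>w. w |\<in>| wits p \<longrightarrow> r (\<rho> w) = w \<and> \<rho> w \<notin> allvars p \<Longrightarrow>
   \<forall>v\<in>allvars p. \<not> is_wit v \<longrightarrow> \<rho> v = v \<and> r v = v \<Longrightarrow> substs r (rename \<rho> p) = p"
proof (induction p arbitrary: r)
  case (Pred P xs)
  then have "r (\<rho> v) = v" if "v \<in> set xs" for v
    using that by (cases "is_wit v") (auto simp: fset_of_list.rep_eq)
  then show ?case by (simp add: map_idI)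
next
  case (All z p)
  then have "\<rho> z = z" by simp
  moreover have "substs (r(z:=z)) (rename \<rho> p) = p" using All.prems by (intro All.IH) auto
  ultimately show ?case by simp
next
  case (Just t X p)
  have X_inv: "r (\<rho> u) = u" if "u |\<in>| X" for u
    using that Just.prems(2,3) by (cases "is_wit u") auto
  have "rename_tm \<rho> t = t"
    using Just.prems(1,3) henkin_tm_allvars_not_wit by (intro rename_tm_id) auto
  moreover have "r |`| (\<rho> |`| X) = X" using X_inv by (force simp: fset_eq_iff image_iff)
  moreover have "substs (\<lambda>v. if v |\<in>| \<rho> |`| X then r v else v) (rename \<rho> p) = p"
    using Just.prems by (intro Just.IH) (auto simp: less_eq_fset.rep_eq)
  ultimately show ?case by simp
qed auto

lemma henkin_basic_renaming:
  assumes hA: "henkin A"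
  obtains \<rho> r where "inj_on \<rho> (allvars A)" "\<forall>v. \<not> is_wit (\<rho> v)" "substs r (rename \<rho> A) = A"
    "\<forall>v. r v \<noteq> v \<longrightarrow> v \<in> fv (rename \<rho> A) \<and> \<not> is_wit v \<and> is_wit (r v)" "inj_on r {v. r v \<noteq> v}"
proof -
  have "finite (BV -` allvars A)" by (rule finite_vimageI) (auto simp: inj_on_def)
  then obtain N where "\<forall>n\<in>BV -` allvars A. n < N" unfolding finite_nat_set_iff_bounded by blast
  then have N: "BV n \<in> allvars A \<Longrightarrow> n < N" for n by auto
  define \<rho> where "\<rho> v = (case v of BV m \<Rightarrow> BV m | WV n \<Rightarrow> BV (N + n))" for v
  define r where "r v = (case v of WV n \<Rightarrow> WV n
    | BV m \<Rightarrow> (if N \<le> m \<and> WV (m - N) |\<in>| wits A then WV (m - N) else BV m))" for v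
  have inj: "inj_on \<rho> (allvars A)"
  proof (rule inj_onI)
    fix u v assume u: "u \<in> allvars A" and v: "v \<in> allvars A" and e: "\<rho> u = \<rho> v"
    show "u = v"
    proof (cases u; cases v)
      fix m n assume "u = BV m" "v = WV n" then show ?thesis using e u N by (auto simp: \<rho>_def)
    next
      fix m n assume "u = WV m" "v = BV n" then show ?thesis using e v N by (auto simp: \<rho>_def)
    qed (use e in \<open>auto simp: \<rho>_def\<close>)
  qed
  have basic: "\<forall>v. \<not> is_wit (\<rho> v)" by (auto simp: \<rho>_def split: var.splits)
  have inv: "substs r (rename \<rho> A) = A"
  proof (rule substs_rename_inv[OF hA])
    show "\<forall>w. w |\<in>| wits A \<longrightarrow> r (\<rho> w) = w \<and> \<rho> w \<notin> allvars A"
    proof (intro allI impI)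
      fix w assume w: "w |\<in>| wits A"
      have "is_wit w" using w by (rule is_wit_if_in_wits)
      then obtain n where "w = WV n" by (cases w) auto
      then show "r (\<rho> w) = w \<and> \<rho> w \<notin> allvars A" using w N by (auto simp: \<rho>_def r_def)
    qed
    show "\<forall>v\<in>allvars A. \<not> is_wit v \<longrightarrow> \<rho> v = v \<and> r v = v"
    proof (intro ballI impI)
      fix v assume v: "v \<in> allvars A" "\<not> is_wit v"
      then obtain m where "v = BV m" by (cases v) auto
      then show "\<rho> v = v \<and> r v = v" using N[of m] v by (auto simp: \<rho>_def r_def)
    qed
  qed
  have r_moves: "\<forall>v. r v \<noteq> v \<longrightarrow> v \<in> fv (rename \<rho> A) \<and> \<not> is_wit v \<and> is_wit (r v)"
  proof (intro allI impI)
    fix v assume "r v \<noteq> v"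
    then obtain m where m: "v = BV m" "N \<le> m" "WV (m - N) |\<in>| wits A"
      by (cases v) (auto simp: r_def split: if_splits)
    then have "\<rho> (WV (m - N)) \<in> \<rho> ` fv A" using henkin_wit_in_fv[OF hA] by blast
    then show "v \<in> fv (rename \<rho> A) \<and> \<not> is_wit v \<and> is_wit (r v)"
      using m fv_rename[OF inj] by (simp add: \<rho>_def r_def)
  qed
  have r_inj: "inj_on r {v. r v \<noteq> v}"
  proof (rule inj_onI)
    fix u v assume u: "u \<in> {v. r v \<noteq> v}" and v: "v \<in> {v. r v \<noteq> v}" and "r u = r v"
    obtain m where "u = BV m" "N \<le> m" "WV (m - N) |\<in>| wits A"
      using u by (cases u) (auto simp: r_def split: if_splits)
    moreover obtain m' where "v = BV m'" "N \<le> m'" "WV (m' - N) |\<in>| wits A"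
      using v by (cases v) (auto simp: r_def split: if_splits)
    ultimately show "u = v" using \<open>r u = r v\<close> by (simp add: r_def)
  qed
  show ?thesis using inj basic inv r_moves r_inj by (rule that)
qed

lemma axiom_rename: "axiom p \<Longrightarrow> inj_on r (allvars p) \<Longrightarrow> axiom (rename r p)"
proof (induction rule: axiom.induct)
  case (A1_inst x y p)
  show ?case
  proof (cases "x \<in> fv p")
    case True
    then have "y \<in> allvars (subst x y p)" using in_allvars_substs_upd by (simp add: subst_def)
    then have "insert x (insert y (allvars p)) \<subseteq> allvars (Imp (All x p) (subst x y p))" by auto
    then have inj: "inj_on r (insert x (insert y (allvars p)))"
      using A1_inst.prems by (rule inj_on_subset[rotated])
    show ?thesis
      using axiom.A1_inst[OF freefor_rename[OF A1_inst.hyps inj]] rename_subst[OF inj] by simp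
  next
    case False
    then have "subst x y p = p" by (simp add: subst_def substs_upd_notin_fv)
    then show ?thesis
      using axiom.A1_inst[OF freefor_self, of "r x" "rename r p"] by (simp add: subst_def substs_id)
  qed
next
  case (A1_dist x p q)
  then show ?case using notin_fv_rename[of r x p] by (auto intro: axiom.A1_dist inj_on_subset)
next
  case (A2 y p t X)
  then show ?case using notin_fv_rename[of r y p] by (auto intro: axiom.A2 inj_on_subset)
next
  case (B5 x X t p)
  then have "r x \<notin> r ` fset X" by (auto simp: inj_on_def)
  then show ?case by (simp add: axiom.B5)
next
  case (Bb y X t p)
  then have "r y \<notin> r ` fset X" by (auto simp: inj_on_def)
  then show ?case by (simp add: axiom.Bb)
qed (auto intro: axiom.intros)

section \<open>Instances of templates\<close>

lemma inst_cong: "(\<forall>i\<in>set (letters G). \<chi>1 i = \<chi>2 i) \<Longrightarrow> inst \<chi>1 G = inst \<chi>2 G"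
  by (induction G) auto

lemma wits_inst: "p \<in> inst \<chi> G \<Longrightarrow> fset (wits p) = (\<Union>i\<in>set (letters G). fset (wits (\<chi> i)))"
proof (induction G arbitrary: p)
  case (TL i) then show ?case by simp
next
  case (TNeg G) then show ?case by auto
next
  case (TOr G H)
  then obtain g h where "p = Or g h" "g \<in> inst \<chi> G" "h \<in> inst \<chi> H" by auto
  then show ?case using TOr.IH by auto
next
  case (TAnd G H)
  then obtain g h where "p = And g h" "g \<in> inst \<chi> G" "h \<in> inst \<chi> H" by auto
  then show ?case using TAnd.IH by (auto simp: And_def Neg_def)
next
  case (TBox G)
  then obtain t g where "p = Just t (wits g) g" "henkin_tm t" "g \<in> inst \<chi> G" by auto
  then show ?case using TBox.IH by (auto simp: henkin_tm_witst_empty)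
qed

lemma wits_inst_eq: "p1 \<in> inst \<chi> G \<Longrightarrow> p2 \<in> inst \<chi> G \<Longrightarrow> wits p1 = wits p2"
  using wits_inst by (metis fset_inject)

lemma fv_inst_subset: "p \<in> inst \<chi> G \<Longrightarrow> fv p \<subseteq> (\<Union>i\<in>set (letters G). allvars (\<chi> i))"
proof (induction G arbitrary: p)
  case (TL i) then show ?case using fv_subset_allvars by auto
next
  case (TNeg G)
  then obtain g where "p = Neg g" "g \<in> inst \<chi> G" by auto
  then show ?case using TNeg.IH by auto
next
  case (TOr G H)
  then obtain g h where "p = Or g h" "g \<in> inst \<chi> G" "h \<in> inst \<chi> H" by auto
  then show ?case using TOr.IH by auto
next
  case (TAnd G H)
  then obtain g h where "p = And g h" "g \<in> inst \<chi> G" "h \<in> inst \<chi> H" by auto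
  then show ?case using TAnd.IH by (auto simp: And_def Neg_def)
next
  case (TBox G)
  then obtain t g where g: "p = Just t (wits g) g" "g \<in> inst \<chi> G" by auto
  have "fset (wits g) \<subseteq> (\<Union>i\<in>set (letters G). allvars (\<chi> i))"
    using wits_inst[OF g(2)] wit_in_wits_iff is_wit_if_in_wits by fastforce
  then show ?case using g by simp
qed

lemma henkin_inst: "(\<forall>i\<in>set (letters G). henkin (\<chi> i)) \<Longrightarrow> p \<in> inst \<chi> G \<Longrightarrow> henkin p"
proof (induction G arbitrary: p)
  case (TAnd G H)
  then show ?case by (auto simp: And_def)
qed auto

lemma wit_notin_inst: "is_wit a \<Longrightarrow> (\<forall>i\<in>set (letters G). a \<notin> allvars (\<chi> i)) \<Longrightarrow> p \<in> inst \<chi> G \<Longrightarrow> a \<notin> allvars p"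
proof
  assume a: "is_wit a" "\<forall>i\<in>set (letters G). a \<notin> allvars (\<chi> i)" "p \<in> inst \<chi> G" "a \<in> allvars p"
  then have "a |\<in>| wits p" using wit_in_wits_iff by blast
  then obtain i where "i \<in> set (letters G)" "a |\<in>| wits (\<chi> i)" using wits_inst[OF a(3)] by auto
  then show False using a wit_in_wits_iff by blast
qed

lemma inst_upd_notin_letters: "q \<notin> set (letters G) \<Longrightarrow> inst (\<chi>(q := \<theta>)) G = inst \<chi> G"
  by (rule inst_cong) auto

lemma henkin_inst_upd:
  "henkin \<theta> \<Longrightarrow> \<forall>i\<in>set (letters G). i \<noteq> q \<longrightarrow> henkin (\<chi> i) \<Longrightarrow> p \<in> inst (\<chi>(q := \<theta>)) G \<Longrightarrow> henkin p"
  by (rule henkin_inst) auto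

lemma wits_inst_upd:
  assumes "fset (wits \<theta>) \<subseteq> insert a (fset (wits \<theta>'))"
    and "p \<in> inst (\<chi>(q := \<theta>)) G" and "p' \<in> inst (\<chi>(q := \<theta>')) G"
  shows "fset (wits p) \<subseteq> insert a (fset (wits p'))"
  using assms wits_inst[OF assms(2)] wits_inst[OF assms(3)] by fastforce

lemma inst_rename_fresh:
  assumes "p \<in> inst \<chi> G" and "is_wit a" and "\<forall>i\<in>set (letters G). a \<notin> allvars (\<chi> i) \<and> y \<notin> allvars (\<chi> i)"
  shows "rename (id(a:=y)) p = p" and "y \<notin> fv p"
proof -
  have "a \<notin> allvars p" using wit_notin_inst[OF assms(2) _ assms(1)] assms(3) by blast
  then show "rename (id(a:=y)) p = p" by (intro rename_id) auto
  show "y \<notin> fv p" using fv_inst_subset[OF assms(1)] assms(3) by blast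
qed

section \<open>The calculus\<close>

lemma derives_finite: "derives CS H p \<Longrightarrow> finite H"
  by (induction rule: derives.induct) auto

locale appropriate_cs =
  fixes CS :: "fm set"
  assumes CS_const_spec: "const_spec CS" and CS_appropriate: "axiomatically_appropriate CS"
begin

lemma CS_basic_axiom: "Just (JC c) {||} A \<in> CS \<Longrightarrow> basic A \<and> axiom A"
  using CS_const_spec unfolding const_spec_def by fastforce

lemma henkin_CSV: "p \<in> CSV CS \<Longrightarrow> henkin p"
proof -
  assume "p \<in> CSV CS"
  then obtain c A B r where p: "p = Just (JC c) (wits B) B" and A: "Just (JC c) {||} A \<in> CS"
    and r: "\<forall>v. r v \<noteq> v \<longrightarrow> v \<in> fv A \<and> \<not> is_wit v \<and> is_wit (r v)" and B: "B = substs r A"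
    unfolding CSV_def by blast
  have "henkin A" using CS_basic_axiom[OF A] wits_empty_henkin unfolding basic_def by blast
  then have "henkin B" using B r henkin_substs by blast
  then show ?thesis using p by simp
qed

lemma derives_henkin: "derives CS H p \<Longrightarrow> \<forall>h\<in>H. henkin h \<Longrightarrow> henkin p"
  by (induction rule: derives.induct) (auto simp: henkin_CSV)

abbreviation provable_from (infix "\<turnstile>" 55) where "G \<turnstile> p \<equiv> provable CS G p"

lemma provable_hyp: "p \<in> G \<Longrightarrow> G \<turnstile> p"
  unfolding provable_def by (intro exI[of _ "{p}"]) (auto intro: derives.hyp)

lemma provable_axiom: "axiom p \<Longrightarrow> henkin p \<Longrightarrow> G \<turnstile> p"
  unfolding provable_def by (intro exI[of _ "{}"]) (auto intro: derives.ax)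

lemma provable_CSV: "p \<in> CSV CS \<Longrightarrow> G \<turnstile> p"
  unfolding provable_def by (intro exI[of _ "{}"]) (auto intro: derives.cs)

lemma provable_mp: "G \<turnstile> Imp p q \<Longrightarrow> G \<turnstile> p \<Longrightarrow> G \<turnstile> q"
  unfolding provable_def by (meson Un_subset_iff derives.mp)

lemma provable_mono: "G \<turnstile> p \<Longrightarrow> G \<subseteq> G' \<Longrightarrow> G' \<turnstile> p"
  unfolding provable_def by auto

lemma provable_gen: "G \<turnstile> p \<Longrightarrow> \<not> is_wit x \<Longrightarrow> \<forall>h\<in>G. x \<notin> fv h \<Longrightarrow> G \<turnstile> All x p"
  unfolding provable_def by (auto intro!: derives.gen)

lemma provable_henkin: "G \<turnstile> p \<Longrightarrow> \<forall>h\<in>G. henkin h \<Longrightarrow> henkin p"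
  unfolding provable_def using derives_henkin by blast

lemma provable_from_empty: "{} \<turnstile> p \<Longrightarrow> G \<turnstile> p" by (auto intro: provable_mono)

lemma derives_thm: "{} \<turnstile> p \<Longrightarrow> derives CS {} p"
  unfolding provable_def by auto

lemma provable_imp_refl: "henkin h \<Longrightarrow> G \<turnstile> Imp h h"
proof -
  assume h: "henkin h"
  have S: "G \<turnstile> Imp (Imp h (Imp (Imp h h) h)) (Imp (Imp h (Imp h h)) (Imp h h))"
    using h by (intro provable_axiom) (auto intro: axiom.intros)
  have K1: "G \<turnstile> Imp h (Imp (Imp h h) h)" using h by (intro provable_axiom) (auto intro: axiom.intros)
  have K2: "G \<turnstile> Imp h (Imp h h)" using h by (intro provable_axiom) (auto intro: axiom.intros)
  show ?thesis using provable_mp[OF provable_mp[OF S K1] K2] .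
qed

lemma provable_imp_const: "G \<turnstile> p \<Longrightarrow> henkin p \<Longrightarrow> henkin h \<Longrightarrow> G \<turnstile> Imp h p"
  by (rule provable_mp[of _ p]) (auto intro!: provable_axiom axiom.intros)

lemma derives_deduction: "derives CS H p \<Longrightarrow> \<forall>g\<in>H. henkin g \<Longrightarrow> henkin h \<Longrightarrow> (H - {h}) \<turnstile> Imp h p"
proof (induction rule: derives.induct)
  case (hyp p)
  show ?case
  proof (cases "p = h")
    case True then show ?thesis using hyp by (simp add: provable_imp_refl)
  next
    case False then show ?thesis using hyp by (intro provable_imp_const provable_hyp) auto
  qed
next
  case (ax p) then show ?case by (intro provable_imp_const provable_axiom) auto
next
  case (cs p) then show ?case by (intro provable_imp_const provable_CSV) (auto simp: henkin_CSV)
next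
  case (mp H1 p q H2)
  have hq: "henkin (Imp p q)" using mp derives_henkin by blast
  have hpq: "H1 \<union> H2 - {h} \<turnstile> Imp h (Imp p q)" using mp by (auto intro: provable_mono)
  have hp: "H1 \<union> H2 - {h} \<turnstile> Imp h p" using mp by (auto intro: provable_mono)
  have S: "H1 \<union> H2 - {h} \<turnstile> Imp (Imp h (Imp p q)) (Imp (Imp h p) (Imp h q))"
    using hq mp by (intro provable_axiom) (auto intro: axiom.intros)
  show ?case using provable_mp[OF provable_mp[OF S hpq] hp] .
next
  case (gen H p x)
  have hp: "henkin p" using gen derives_henkin by blast
  show ?case
  proof (cases "x \<in> fv h")
    case True
    then have "h \<notin> H" using gen by auto
    then have "(H - {h}) \<turnstile> All x p" unfolding provable_def using gen derives.gen by auto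
    then show ?thesis using gen hp by (intro provable_imp_const) auto
  next
    case False
    have "(H - {h}) \<turnstile> All x (Imp h p)" using gen by (intro provable_gen) auto
    moreover have "(H - {h}) \<turnstile> Imp (All x (Imp h p)) (Imp h (All x p))"
      using False gen hp by (intro provable_axiom) (auto intro: axiom.intros)
    ultimately show ?thesis by (rule provable_mp[rotated])
  qed
qed

lemma provable_deduction: "insert h G \<turnstile> p \<Longrightarrow> \<forall>g\<in>G. henkin g \<Longrightarrow> henkin h \<Longrightarrow> G \<turnstile> Imp h p"
proof -
  assume a: "insert h G \<turnstile> p" "\<forall>g\<in>G. henkin g" "henkin h"
  then obtain H where H: "H \<subseteq> insert h G" "derives CS H p" unfolding provable_def by blast
  then have "(H - {h}) \<turnstile> Imp h p" using a by (intro derives_deduction) auto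
  then show ?thesis using H by (auto intro: provable_mono)
qed

lemma provable_cut:
  "finite T \<Longrightarrow> T \<union> G \<turnstile> p \<Longrightarrow> \<forall>t\<in>T. G \<turnstile> t \<Longrightarrow> \<forall>g\<in>T \<union> G. henkin g \<Longrightarrow> G \<turnstile> p"
proof (induction T arbitrary: p rule: finite_induct)
  case (insert t T)
  have "T \<union> G \<turnstile> Imp t p" by (rule provable_deduction) (use insert.prems in auto)
  then have "G \<turnstile> Imp t p" by (rule insert.IH) (use insert.prems in auto)
  then show ?case using provable_mp insert.prems(2) by blast
qed simp

lemma provable_imp_trans: "G \<turnstile> Imp a b \<Longrightarrow> G \<turnstile> Imp b c \<Longrightarrow> \<forall>g\<in>G. henkin g \<Longrightarrow> henkin a \<Longrightarrow> G \<turnstile> Imp a c"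
proof -
  assume ab: "G \<turnstile> Imp a b" and bc: "G \<turnstile> Imp b c" and g: "\<forall>g\<in>G. henkin g" and ha: "henkin a"
  have "insert a G \<turnstile> c"
    using provable_mp[OF provable_mono[OF bc] provable_mp[OF provable_mono[OF ab] provable_hyp]] by auto
  then show ?thesis using g ha by (intro provable_deduction)
qed

lemma provable_double_neg: "G \<turnstile> Neg (Neg p) \<Longrightarrow> henkin p \<Longrightarrow> G \<turnstile> p"
  by (rule provable_mp[rotated]) (auto intro!: provable_axiom axiom.intros)

lemma provable_contradiction: "G \<turnstile> Neg p \<Longrightarrow> G \<turnstile> p \<Longrightarrow> G \<turnstile> Bot"
  unfolding Neg_def by (rule provable_mp)

lemma provable_classical:
  assumes "insert (Neg p) G \<turnstile> Bot" and "\<forall>g\<in>G. henkin g" and "henkin p"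
  shows "G \<turnstile> p"
proof -
  have "G \<turnstile> Neg (Neg p)" unfolding Neg_def[of "Neg p"] using assms by (intro provable_deduction) auto
  then show ?thesis using provable_double_neg assms(3) by blast
qed

lemma provable_All_imp_self: "henkin (All y p) \<Longrightarrow> G \<turnstile> Imp (All y p) p"
  using axiom.A1_inst[OF freefor_self, of y p] by (intro provable_axiom) (auto simp: subst_def substs_id)

lemma provable_All_elim_self: "G \<turnstile> All y p \<Longrightarrow> henkin (All y p) \<Longrightarrow> G \<turnstile> p"
  using provable_All_imp_self provable_mp by blast

lemma provable_All_mono: "{} \<turnstile> Imp P Q \<Longrightarrow> henkin P \<Longrightarrow> henkin Q \<Longrightarrow> \<not> is_wit y \<Longrightarrow> {} \<turnstile> Imp (All y P) (All y Q)"
proof -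
  assume PQ: "{} \<turnstile> Imp P Q" and hP: "henkin P" and hQ: "henkin Q" and y: "\<not> is_wit y"
  have "{All y P} \<turnstile> P" by (rule provable_All_elim_self[OF provable_hyp]) (use hP y in auto)
  then have "{All y P} \<turnstile> Q" by (rule provable_mp[OF provable_from_empty[OF PQ]])
  then have "{All y P} \<turnstile> All y Q" using y by (intro provable_gen) auto
  then show ?thesis using hP y by (intro provable_deduction) auto
qed

lemma provable_Or_mono:
  assumes g: "{} \<turnstile> Imp g1 g" and h: "{} \<turnstile> Imp h1 h"
    and "henkin g1" "henkin g" "henkin h1" "henkin h"
  shows "{} \<turnstile> Imp (Or g1 h1) (Or g h)"
proof -
  let ?G = "{Neg g, Or g1 h1}"
  have "insert g1 ?G \<turnstile> g" using provable_mp[OF provable_from_empty[OF g] provable_hyp] by simp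
  then have "insert g1 ?G \<turnstile> Bot" by (rule provable_contradiction[OF provable_hyp, rotated]) simp
  then have "?G \<turnstile> Neg g1" unfolding Neg_def[of g1] using assms by (intro provable_deduction) auto
  then have "?G \<turnstile> h1" using provable_mp[OF provable_hyp[of "Imp (Neg g1) h1" ?G]] by (simp add: Or_def)
  then have "?G \<turnstile> h" using provable_mp[OF provable_from_empty[OF h]] by blast
  then have "{Or g1 h1} \<turnstile> Or g h" unfolding Or_def[of g h] using assms by (intro provable_deduction) auto
  then show ?thesis using assms by (intro provable_deduction) auto
qed

lemma provable_All_alpha:
  assumes h: "henkin (All x \<phi>)" and y: "y \<notin> allvars \<phi>" "y \<noteq> x" "\<not> is_wit y"
  shows "{} \<turnstile> Imp (All y (subst x y \<phi>)) (All x \<phi>)"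
proof -
  let ?P = "subst x y \<phi>"
  have xw: "\<not> is_wit x" using h by simp
  have hP: "henkin ?P" using h xw unfolding subst_def by (intro henkin_substs) auto
  have "freefor y x ?P" unfolding subst_def using freefor_substs_upd_fresh[OF y(1)] y(2) by auto
  moreover have "subst y x ?P = \<phi>" unfolding subst_def using substs_upd_upd_fresh[OF y(1)] .
  ultimately have "{All y ?P} \<turnstile> Imp (All y ?P) \<phi>"
    using axiom.A1_inst[of y x ?P] hP h y by (intro provable_axiom) auto
  then have "{All y ?P} \<turnstile> \<phi>" by (rule provable_mp) (rule provable_hyp, simp)
  moreover have "x \<notin> fv ?P" unfolding subst_def using notin_fv_substs_upd y(2) by metis
  ultimately have "{All y ?P} \<turnstile> All x \<phi>" using xw by (intro provable_gen) auto
  then show ?thesis using hP y by (intro provable_deduction) auto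
qed

lemma provable_All_Or_left:
  assumes imp: "{} \<turnstile> Imp (All y A) A'" and h: "henkin A" "henkin A'" "henkin B"
    and y: "\<not> is_wit y" "y \<notin> fv B"
  shows "{} \<turnstile> Imp (All y (Or A B)) (Or A' B)"
proof -
  let ?U = "All y (Or A B)"
  have hU: "henkin ?U" using h y by simp
  have "insert (Neg A) {Neg B, ?U} \<turnstile> Imp (Neg A) B"
    using provable_All_elim_self[OF provable_hyp[of ?U] hU] unfolding Or_def by simp
  then have "insert (Neg A) {Neg B, ?U} \<turnstile> B" by (rule provable_mp) (rule provable_hyp, simp)
  then have "insert (Neg A) {Neg B, ?U} \<turnstile> Bot" by (rule provable_contradiction[OF provable_hyp, rotated]) simp
  then have "{Neg B, ?U} \<turnstile> A" by (rule provable_classical) (use h hU in auto)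
  then have "{Neg B, ?U} \<turnstile> All y A" using y by (intro provable_gen) auto
  then have "{Neg B, ?U} \<turnstile> A'" by (rule provable_mp[OF provable_from_empty[OF imp]])
  then have "insert (Neg B) {Neg A', ?U} \<turnstile> A'" by (rule provable_mono) auto
  then have "insert (Neg B) {Neg A', ?U} \<turnstile> Bot" by (rule provable_contradiction[OF provable_hyp, rotated]) simp
  then have "{Neg A', ?U} \<turnstile> B" by (rule provable_classical) (use h hU in auto)
  then have "{?U} \<turnstile> Or A' B" unfolding Or_def[of A' B] using h hU by (intro provable_deduction) auto
  then show ?thesis using hU by (intro provable_deduction) auto
qed

lemma provable_All_Or_right:
  assumes imp: "{} \<turnstile> Imp (All y B) B'" and h: "henkin A" "henkin B" "henkin B'"
    and y: "\<not> is_wit y" "y \<notin> fv A"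
  shows "{} \<turnstile> Imp (All y (Or A B)) (Or A B')"
proof -
  have ax: "{} \<turnstile> Imp (All y (Imp (Neg A) B)) (Imp (Neg A) (All y B))"
    using h y by (intro provable_axiom) (auto intro: axiom.A1_dist)
  let ?G = "{Neg A, Imp (Neg A) (All y B)}"
  have "?G \<turnstile> All y B" by (rule provable_mp[OF provable_hyp provable_hyp]) auto
  then have "?G \<turnstile> B'" by (rule provable_mp[OF provable_from_empty[OF imp]])
  then have "{} \<turnstile> Imp (Imp (Neg A) (All y B)) (Imp (Neg A) B')"
    using h y by (intro provable_deduction) auto
  with ax show ?thesis unfolding Or_def by (rule provable_imp_trans) (use h y in simp_all)
qed

section \<open>Justification terms\<close>

lemma provable_Just_subscript_add:
  "henkin (Just t X p) \<Longrightarrow> {} \<turnstile> Imp (Just t X p) (Just t (X |\<union>| Y) p)"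
proof (induction Y rule: fset_induct)
  case empty then show ?case by (simp add: provable_imp_refl)
next
  case (insert y Y)
  have "{} \<turnstile> Imp (Just t (X |\<union>| Y) p) (Just t (finsert y (X |\<union>| Y)) p)"
    using insert.prems by (intro provable_axiom) (auto intro: axiom.A3)
  then have "{} \<turnstile> Imp (Just t X p) (Just t (finsert y (X |\<union>| Y)) p)"
    by (rule provable_imp_trans[OF insert.IH[OF insert.prems]]) (use insert.prems in simp_all)
  then show ?case by simp
qed

lemma provable_Just_subscript_remove:
  "henkin (Just t Y p) \<Longrightarrow> fset D \<inter> fv p = {} \<Longrightarrow> {} \<turnstile> Imp (Just t (Y |\<union>| D) p) (Just t Y p)"
proof (induction D rule: fset_induct)
  case empty then show ?case by (simp add: provable_imp_refl)
next
  case (insert d D)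
  have "{} \<turnstile> Imp (Just t (finsert d (Y |\<union>| D)) p) (Just t (Y |\<union>| D) p)"
    using insert.prems by (intro provable_axiom) (auto intro: axiom.A2)
  moreover have "{} \<turnstile> Imp (Just t (Y |\<union>| D) p) (Just t Y p)"
    by (rule insert.IH[OF insert.prems(1)]) (use insert.prems(2) in auto)
  ultimately have "{} \<turnstile> Imp (Just t (finsert d (Y |\<union>| D)) p) (Just t Y p)"
    by (rule provable_imp_trans) (use insert.prems in auto)
  then show ?case by simp
qed

lemma provable_Just_subscript:
  assumes h: "henkin (Just t X p)" and "wits p |\<subseteq>| Y" and "fset X \<inter> fv p \<subseteq> fset Y"
  shows "{} \<turnstile> Imp (Just t X p) (Just t Y p)"
proof -
  have "fset (X |-| Y) \<inter> fv p = {}" using assms(3) by auto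
  then have "{} \<turnstile> Imp (Just t (Y |\<union>| (X |-| Y)) p) (Just t Y p)"
    using h assms(2) by (intro provable_Just_subscript_remove) auto
  moreover have "Y |\<union>| (X |-| Y) = X |\<union>| Y" by auto
  ultimately have "{} \<turnstile> Imp (Just t (X |\<union>| Y) p) (Just t Y p)" by simp
  then show ?thesis by (rule provable_imp_trans[OF provable_Just_subscript_add[OF h]]) (use h in auto)
qed

lemma provable_Just_change_subscript:
  "{} \<turnstile> Just t X p \<Longrightarrow> wits p |\<subseteq>| Y \<Longrightarrow> fset X \<inter> fv p \<subseteq> fset Y \<Longrightarrow> {} \<turnstile> Just t Y p"
  using provable_Just_subscript[of t X p Y] provable_henkin[of "{}" "Just t X p"] provable_mp by blast

lemma provable_Just_subst:
  assumes J: "{} \<turnstile> Just t X p" and v: "\<not> is_wit v" "v |\<notin>| X" and y: "y \<notin> allvars p"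
  shows "{} \<turnstile> Just t (finsert y X) (subst v y p)"
proof -
  let ?J = "Just t (finsert v X) p"
  have hJ: "henkin (Just t X p)" using provable_henkin[OF J] by simp
  then have h: "henkin ?J" by auto
  have "{} \<turnstile> Imp (Just t X p) ?J" using hJ h by (intro provable_axiom) (auto intro: axiom.A3)
  then have "{} \<turnstile> ?J" using J by (rule provable_mp)
  then have "{} \<turnstile> All v ?J" using v(1) by (intro provable_gen) auto
  moreover have "{} \<turnstile> Imp (All v ?J) (subst v y ?J)"
  proof (rule provable_axiom)
    show "axiom (Imp (All v ?J) (subst v y ?J))"
      using y freefor_fresh[OF y] fv_subset_allvars by (intro axiom.A1_inst) auto
    have "henkin (subst v y ?J)" unfolding subst_def using v(1) by (intro henkin_substs[OF h]) auto
    then show "henkin (Imp (All v ?J) (subst v y ?J))" using h v(1) by simp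
  qed
  ultimately have "{} \<turnstile> subst v y ?J" by (rule provable_mp[rotated])
  moreover have "subst v y ?J = Just t (finsert y X) (subst v y p)"
  proof -
    have "(\<lambda>w. if w |\<in>| finsert v X then (id(v:=y)) w else w) = id(v:=y)" by auto
    moreover have "id(v:=y) |`| finsert v X = finsert y X" using v(2) by (auto simp: fset_eq_iff)
    ultimately show ?thesis by (simp add: subst_def)
  qed
  ultimately show ?thesis by simp
qed

lemma axiom_Just_in_CSV:
  assumes "axiom A" and "henkin A"
  shows "\<exists>c. Just (JC c) (wits A) A \<in> CSV CS"
proof -
  obtain \<rho> r where \<rho>: "inj_on \<rho> (allvars A)" "\<forall>v. \<not> is_wit (\<rho> v)" "substs r (rename \<rho> A) = A"
    and r: "\<forall>v. r v \<noteq> v \<longrightarrow> v \<in> fv (rename \<rho> A) \<and> \<not> is_wit v \<and> is_wit (r v)" "inj_on r {v. r v \<noteq> v}"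
    using henkin_basic_renaming[OF assms(2)] by blast
  have "basic (rename \<rho> A)" "axiom (rename \<rho> A)"
    using wits_rename_basic[OF \<rho>(2)] axiom_rename[OF assms(1) \<rho>(1)] by (simp_all add: basic_def)
  then obtain c where c: "Just (JC c) {||} (rename \<rho> A) \<in> CS"
    using CS_appropriate unfolding axiomatically_appropriate_def by blast
  have "Just (JC c) (wits A) A \<in> CSV CS" unfolding CSV_def mem_Collect_eq
    by (intro exI[of _ c] exI[of _ "rename \<rho> A"] exI[of _ A] conjI refl c exI[of _ r] r)
      (simp add: \<rho>(3))
  then show ?thesis ..
qed

lemma derives_internalize: "derives CS H A \<Longrightarrow> H = {} \<Longrightarrow> \<exists>t. henkin_tm t \<and> {} \<turnstile> Just t (wits A) A"
proof (induction rule: derives.induct)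
  case (hyp p) then show ?case by simp
next
  case (ax p)
  then obtain c where "Just (JC c) (wits p) p \<in> CSV CS" using axiom_Just_in_CSV by blast
  then show ?case by (intro exI[of _ "JC c"]) (auto intro: provable_CSV)
next
  case (cs p)
  then obtain c A B r where p: "p = Just (JC c) (wits B) B"
    unfolding CSV_def by blast
  have hp: "henkin p" using henkin_CSV[OF cs.hyps] .
  have wp: "wits p = wits B" using p by simp
  have "{} \<turnstile> Imp p (Just (JBang (JC c)) (wits B) p)"
    using hp p by (intro provable_axiom) (auto intro: axiom.B4)
  then have "{} \<turnstile> Just (JBang (JC c)) (wits B) p" using provable_mp[OF _ provable_CSV[OF cs.hyps]] by blast
  then have "{} \<turnstile> Just (JBang (JC c)) (wits p) p" using wp by simp
  then show ?case by (intro exI[of _ "JBang (JC c)"]) simp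
next
  case (mp H1 p q H2)
  then have e: "H1 = {}" "H2 = {}" by auto
  obtain t1 where t1: "henkin_tm t1" "{} \<turnstile> Just t1 (wits (Imp p q)) (Imp p q)" using mp e by blast
  obtain t2 where t2: "henkin_tm t2" "{} \<turnstile> Just t2 (wits p) p" using mp e by blast
  have hpq: "henkin (Imp p q)" using mp.hyps(1) e derives_henkin by blast
  let ?X = "wits p |\<union>| wits q"
  have J_p: "{} \<turnstile> Just t2 ?X p" using t2(2) by (rule provable_Just_change_subscript) auto
  have J_imp: "{} \<turnstile> Just t1 ?X (Imp p q)" using t1(2) by simp
  have "{} \<turnstile> Imp (Just t1 ?X (Imp p q)) (Imp (Just t2 ?X p) (Just (JApp t1 t2) ?X q))"
    using t1 t2 hpq by (intro provable_axiom) (auto intro: axiom.B2)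
  then have J_q: "{} \<turnstile> Just (JApp t1 t2) ?X q" using provable_mp[OF provable_mp[OF _ J_imp] J_p] by blast
  have "fset ?X \<inter> fv q \<subseteq> fset (wits q)" using wit_in_wits_if_in_fv is_wit_if_in_wits by auto
  then have "{} \<turnstile> Just (JApp t1 t2) (wits q) q" by (rule provable_Just_change_subscript[OF J_q, rotated]) simp
  then show ?case using t1 t2 by (intro exI[of _ "JApp t1 t2"]) simp
next
  case (gen H p x)
  obtain t where t: "henkin_tm t" "{} \<turnstile> Just t (wits p) p" using gen by blast
  have hp: "henkin p" using gen derives_henkin by blast
  have xn: "x |\<notin>| wits p" using gen.hyps(2) is_wit_if_in_wits by blast
  have "{} \<turnstile> Imp (Just t (wits p) p) (Just (JGen x t) (wits p) (All x p))"
    using t hp gen.hyps(2) xn by (intro provable_axiom) (auto intro: axiom.B5)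
  then have "{} \<turnstile> Just (JGen x t) (wits p) (All x p)" using provable_mp[OF _ t(2)] by blast
  moreover have "wits (All x p) = wits p" using gen.hyps(2) by auto
  ultimately show ?case using t gen.hyps(2) by (intro exI[of _ "JGen x t"]) simp
qed

lemma internalize: "{} \<turnstile> A \<Longrightarrow> \<exists>t. henkin_tm t \<and> {} \<turnstile> Just t (wits A) A"
proof -
  assume "{} \<turnstile> A"
  then obtain H where "H \<subseteq> {}" "derives CS H A" unfolding provable_def by blast
  then show ?thesis using derives_internalize by blast
qed

lemma provable_Just_imp_Just:
  assumes imp: "{} \<turnstile> Imp q1 q" and "henkin_tm t" "henkin q1" "henkin q" "wits q1 = wits q"
  shows "\<exists>s. henkin_tm s \<and> {} \<turnstile> Imp (Just t (wits q) q1) (Just (JApp s t) (wits q) q)"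
proof -
  obtain s where s: "henkin_tm s" "{} \<turnstile> Just s (wits (Imp q1 q)) (Imp q1 q)"
    using internalize[OF imp] by blast
  have "{} \<turnstile> Imp (Just s (wits q) (Imp q1 q)) (Imp (Just t (wits q) q1) (Just (JApp s t) (wits q) q))"
    using s(1) assms(2-5) by (intro provable_axiom) (auto intro: axiom.B2)
  then have "{} \<turnstile> Imp (Just t (wits q) q1) (Just (JApp s t) (wits q) q)"
    using s(2) assms(5) by (auto intro: provable_mp)
  then show ?thesis using s(1) by blast
qed

lemma provable_All_Just_imp_Just:
  assumes imp: "{} \<turnstile> Imp (All y R) p'" and ht: "henkin_tm t" and hR: "henkin R" and hp': "henkin p'"
    and y: "\<not> is_wit y" and R_wits: "wits R |\<subseteq>| wits p'"
    and X: "wits R |\<subseteq>| X" "fset X \<subseteq> insert y (fset (wits p'))"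
  shows "\<exists>s. henkin_tm s \<and> {} \<turnstile> Imp (All y (Just t X R)) (Just s (wits p') p')"
proof -
  let ?W = "wits p'"
  have y_W: "y |\<notin>| ?W" using is_wit_if_in_wits y by blast
  have hJ: "henkin (Just t X R)" using ht hR X(1) by simp
  have "{} \<turnstile> Imp (Just t X R) (Just t (finsert y ?W) R)"
    using R_wits X(2) by (intro provable_Just_subscript[OF hJ]) (auto simp: less_eq_fset.rep_eq)
  then have "{} \<turnstile> Imp (All y (Just t X R)) (All y (Just t (finsert y ?W) R))"
    by (rule provable_All_mono) (use hJ ht hR R_wits y in \<open>auto simp: less_eq_fset.rep_eq\<close>)
  moreover have "{} \<turnstile> Imp (All y (Just t (finsert y ?W) R)) (Just (JB t) ?W (All y R))"
    using ht hR R_wits y y_W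
    by (intro provable_axiom) (auto simp: less_eq_fset.rep_eq intro: axiom.Bb)
  ultimately have to_Bb: "{} \<turnstile> Imp (All y (Just t X R)) (Just (JB t) ?W (All y R))"
    by (rule provable_imp_trans) (use hJ y in auto)
  obtain s where s: "henkin_tm s" "{} \<turnstile> Just s (wits (Imp (All y R) p')) (Imp (All y R) p')"
    using internalize[OF imp] by blast
  have "wits (Imp (All y R) p') = ?W" using R_wits y by auto
  then have "{} \<turnstile> Just s ?W (Imp (All y R) p')" using s(2) by simp
  moreover have "{} \<turnstile> Imp (Just s ?W (Imp (All y R) p'))
      (Imp (Just (JB t) ?W (All y R)) (Just (JApp s (JB t)) ?W p'))"
    using s(1) ht hR hp' R_wits y by (intro provable_axiom) (auto simp: less_eq_fset.rep_eq intro: axiom.B2)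
  ultimately have "{} \<turnstile> Imp (Just (JB t) ?W (All y R)) (Just (JApp s (JB t)) ?W p')"
    by (rule provable_mp[rotated])
  then have "{} \<turnstile> Imp (All y (Just t X R)) (Just (JApp s (JB t)) ?W p')"
    by (rule provable_imp_trans[OF to_Bb]) (use hJ y in auto)
  then show ?thesis using s(1) ht by (intro exI[of _ "JApp s (JB t)"]) simp
qed

section \<open>Merging instances of a disjunctive template\<close>

lemma disjunctive_inst_merge2:
  "disjunctive G \<Longrightarrow> \<forall>i\<in>set (letters G). henkin (\<chi> i) \<Longrightarrow> p1 \<in> inst \<chi> G \<Longrightarrow> p2 \<in> inst \<chi> G \<Longrightarrow>
   \<exists>p\<in>inst \<chi> G. {} \<turnstile> Imp p1 p \<and> {} \<turnstile> Imp p2 p"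
proof (induction G arbitrary: p1 p2)
  case (TL i) then show ?case by (auto intro!: provable_imp_refl)
next
  case (TOr G H)
  obtain g1 h1 where dec1: "p1 = Or g1 h1" "g1 \<in> inst \<chi> G" "h1 \<in> inst \<chi> H" using TOr.prems(3) by auto
  obtain g2 h2 where dec2: "p2 = Or g2 h2" "g2 \<in> inst \<chi> G" "h2 \<in> inst \<chi> H" using TOr.prems(4) by auto
  have hG: "\<forall>i\<in>set (letters G). henkin (\<chi> i)" and hH: "\<forall>i\<in>set (letters H). henkin (\<chi> i)"
    using TOr.prems(2) by auto
  obtain g where g: "g \<in> inst \<chi> G" "{} \<turnstile> Imp g1 g" "{} \<turnstile> Imp g2 g"
    using TOr.IH(1)[OF _ hG dec1(2) dec2(2)] TOr.prems(1) by auto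
  obtain h where h: "h \<in> inst \<chi> H" "{} \<turnstile> Imp h1 h" "{} \<turnstile> Imp h2 h"
    using TOr.IH(2)[OF _ hH dec1(3) dec2(3)] TOr.prems(1) by auto
  have "henkin g1" "henkin g2" "henkin g" "henkin h1" "henkin h2" "henkin h"
    using henkin_inst[OF hG] henkin_inst[OF hH] dec1 dec2 g h by blast+
  then have "{} \<turnstile> Imp p1 (Or g h)" "{} \<turnstile> Imp p2 (Or g h)"
    unfolding dec1 dec2 using g h by (auto intro: provable_Or_mono)
  moreover have "Or g h \<in> inst \<chi> (TOr G H)" using g h by auto
  ultimately show ?case by blast
next
  case (TBox G)
  obtain t1 q1 where dec1: "p1 = Just t1 (wits q1) q1" "henkin_tm t1" "q1 \<in> inst \<chi> G"
    using TBox.prems(3) by auto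
  obtain t2 q2 where dec2: "p2 = Just t2 (wits q2) q2" "henkin_tm t2" "q2 \<in> inst \<chi> G"
    using TBox.prems(4) by auto
  have hG: "\<forall>i\<in>set (letters G). henkin (\<chi> i)" using TBox.prems(2) by auto
  obtain q where q: "q \<in> inst \<chi> G" "{} \<turnstile> Imp q1 q" "{} \<turnstile> Imp q2 q"
    using TBox.IH[OF _ hG dec1(3) dec2(3)] TBox.prems(1) by auto
  have h: "henkin q1" "henkin q2" "henkin q" using henkin_inst[OF hG] dec1 dec2 q by blast+
  have w: "wits q1 = wits q" "wits q2 = wits q" using wits_inst_eq dec1(3) dec2(3) q(1) by blast+
  obtain s1 s2 where s: "henkin_tm s1" "henkin_tm s2"
    "{} \<turnstile> Imp p1 (Just (JApp s1 t1) (wits q) q)" "{} \<turnstile> Imp p2 (Just (JApp s2 t2) (wits q) q)"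
    using provable_Just_imp_Just[OF q(2) dec1(2) h(1,3) w(1)] provable_Just_imp_Just[OF q(3) dec2(2) h(2,3) w(2)]
      dec1(1) dec2(1) w by auto
  let ?q = "Just (JSum (JApp s1 t1) (JApp s2 t2)) (wits q) q"
  have "{} \<turnstile> Imp (Just (JApp s1 t1) (wits q) q) ?q" "{} \<turnstile> Imp (Just (JApp s2 t2) (wits q) q) ?q"
    using s dec1(2) dec2(2) h(3) by (auto intro!: provable_axiom intro: axiom.B3l axiom.B3r)
  then have "{} \<turnstile> Imp p1 ?q" "{} \<turnstile> Imp p2 ?q"
    using s(3,4) dec1 dec2 h w by (auto intro: provable_imp_trans)
  moreover have "?q \<in> inst \<chi> (TBox G)" using q(1) s(1,2) dec1(2) dec2(2) by auto
  ultimately show ?case by blast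
qed simp_all

lemma disjunctive_inst_merge:
  "finite S \<Longrightarrow> S \<noteq> {} \<Longrightarrow> S \<subseteq> inst \<chi> G \<Longrightarrow> disjunctive G \<Longrightarrow> \<forall>i\<in>set (letters G). henkin (\<chi> i) \<Longrightarrow>
   \<exists>p\<in>inst \<chi> G. \<forall>s\<in>S. {} \<turnstile> Imp s p"
proof (induction S rule: finite_ne_induct)
  case (singleton x)
  then have "henkin x" using henkin_inst by blast
  then show ?case using singleton by (intro bexI[of _ x]) (auto intro!: provable_imp_refl)
next
  case (insert x S)
  obtain p where p: "p \<in> inst \<chi> G" "\<forall>s\<in>S. {} \<turnstile> Imp s p" using insert by auto
  have xi: "x \<in> inst \<chi> G" using insert.prems by auto
  obtain p' where p': "p' \<in> inst \<chi> G" "{} \<turnstile> Imp x p'" "{} \<turnstile> Imp p p'"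
    using disjunctive_inst_merge2[OF insert.prems(2,3) xi p(1)] by blast
  have "\<forall>s\<in>insert x S. {} \<turnstile> Imp s p'"
  proof
    fix s assume s: "s \<in> insert x S"
    show "{} \<turnstile> Imp s p'"
    proof (cases "s = x")
      case True then show ?thesis using p' by simp
    next
      case False
      then have "s \<in> S" using s by simp
      then have "henkin s" using insert.prems henkin_inst by blast
      then show ?thesis using provable_imp_trans[OF bspec[OF p(2) \<open>s \<in> S\<close>] p'(3)] by simp
    qed
  qed
  then show ?case using p' by blast
qed

lemma provable_inst_if_inconsistent:
  assumes F: "disjunctive F" "\<forall>i\<in>set (letters F). henkin (\<chi> i)" and h\<Gamma>: "\<forall>g\<in>\<Gamma>. henkin g"
    and incons: "\<Gamma> \<union> inst \<chi> (TNeg F) \<turnstile> Bot" and cons: "\<not> \<Gamma> \<turnstile> Bot"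
  shows "\<exists>\<psi>\<in>inst \<chi> F. \<Gamma> \<turnstile> \<psi>"
proof -
  obtain H where H: "H \<subseteq> \<Gamma> \<union> Neg ` inst \<chi> F" "derives CS H Bot"
    using incons unfolding provable_def by auto
  define S where "S = {\<psi> \<in> inst \<chi> F. Neg \<psi> \<in> H}"
  have "finite (Neg -` H)" using derives_finite[OF H(2)] inj_Neg by (intro finite_vimageI) auto
  then have S_finite: "finite S" by (rule finite_subset[rotated]) (auto simp: S_def)
  have H_split: "H \<subseteq> Neg ` S \<union> \<Gamma>" using H(1) by (auto simp: S_def)
  have "S \<noteq> {}"
  proof
    assume "S = {}"
    then have "\<Gamma> \<turnstile> Bot" using H H_split unfolding provable_def by auto
    then show False using cons by blast
  qed
  then obtain \<psi> where \<psi>: "\<psi> \<in> inst \<chi> F" "\<forall>s\<in>S. {} \<turnstile> Imp s \<psi>"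
    using disjunctive_inst_merge[OF S_finite _ _ F] by (auto simp: S_def)
  have h\<psi>: "henkin \<psi>" and hS: "\<forall>s\<in>S. henkin s"
    using henkin_inst[OF F(2)] \<psi>(1) by (auto simp: S_def)
  let ?G = "insert (Neg \<psi>) \<Gamma>"
  have negs: "\<forall>t\<in>Neg ` S. ?G \<turnstile> t"
  proof
    fix t assume "t \<in> Neg ` S"
    then obtain s where s: "s \<in> S" "t = Neg s" by blast
    have "insert s ?G \<turnstile> \<psi>"
      using provable_mp[OF provable_from_empty[OF \<psi>(2)[rule_format, OF s(1)]] provable_hyp[of s]] by simp
    then have "insert s ?G \<turnstile> Bot" by (rule provable_contradiction[OF provable_hyp, rotated]) simp
    then show "?G \<turnstile> t" unfolding s(2) Neg_def using h\<Gamma> h\<psi> hS s(1) by (intro provable_deduction) auto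
  qed
  have "Neg ` S \<union> ?G \<turnstile> Bot" using H H_split unfolding provable_def by blast
  then have "?G \<turnstile> Bot" using negs
    by (rule provable_cut[OF finite_imageI[OF S_finite]]) (use h\<Gamma> h\<psi> hS in auto)
  then have "\<Gamma> \<turnstile> \<psi>" by (rule provable_classical) (use h\<Gamma> h\<psi> in auto)
  then show ?thesis using \<psi>(1) by blast
qed

section \<open>Replacing the witness variable\<close>

lemma provable_Just_subscript_rename_wit:
  assumes J: "{} \<turnstile> Just t (finsert y W) (rename (id(a:=y)) B)" and W: "\<forall>w\<in>fset W. is_wit w"
    and a: "is_wit a" "a |\<in>| wits B" and y: "\<not> is_wit y"
  shows "{} \<turnstile> Just t (id(a:=y) |`| wits B) (rename (id(a:=y)) B)"
proof (rule provable_Just_change_subscript[OF J])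
  let ?r = "id(a:=y)"
  have r_B: "fset (wits (rename ?r B)) \<subseteq> ?r ` fset (wits B)"
    using a y by (intro wits_rename) auto
  then show "wits (rename ?r B) |\<subseteq>| ?r |`| wits B" by (simp add: less_eq_fset.rep_eq)
  show "fset (finsert y W) \<inter> fv (rename ?r B) \<subseteq> fset (?r |`| wits B)"
  proof
    fix v assume v: "v \<in> fset (finsert y W) \<inter> fv (rename ?r B)"
    show "v \<in> fset (?r |`| wits B)"
    proof (cases "v = y")
      case False
      then have "v |\<in>| wits (rename ?r B)" using v W wit_in_wits_if_in_fv by auto
      then show ?thesis using r_B by auto
    qed (use a in force)
  qed
qed

lemma provable_rename_wit_CSV:
  assumes p: "p \<in> CSV CS" and a: "is_wit a"
  shows "\<forall>\<^sub>F y in cofinite. \<not> is_wit y \<longrightarrow> {} \<turnstile> rename (id(a:=y)) p"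
proof (cases "a \<in> allvars p")
  case False
  then have "rename (id(a:=y)) p = p" for y by (intro rename_id) auto
  then show ?thesis using provable_CSV[OF p] by simp
next
  case True
  obtain c A B s where p_eq: "p = Just (JC c) (wits B) B" and A: "Just (JC c) {||} A \<in> CS"
    and s: "\<forall>v. s v \<noteq> v \<longrightarrow> v \<in> fv A \<and> \<not> is_wit v \<and> is_wit (s v)" and s_inj: "inj_on s {v. s v \<noteq> v}"
    and B: "B = substs s A"
    using p unfolding CSV_def by blast
  have A_basic: "wits A = {||}" using CS_basic_axiom[OF A] by (simp add: basic_def)
  have a_A: "a \<notin> allvars A" using wit_in_wits_iff[OF a] A_basic by auto
  have a_B: "a |\<in>| wits B" using True p_eq wit_in_wits_iff[OF a] by auto
  then obtain v0 where v0: "v0 \<in> allvars A" "s v0 = a"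
    using allvars_substs[of s A] B a_A wit_in_wits_iff[OF a] by blast
  then have v0_basic: "\<not> is_wit v0" using s a_A by metis
  define s0 where "s0 = s(v0 := v0)"
  define B0 where "B0 = substs s0 A"
  have s0: "\<forall>v. s0 v \<noteq> v \<longrightarrow> v \<in> fv A \<and> \<not> is_wit v \<and> is_wit (s0 v)"
    using s unfolding s0_def by auto
  have "inj_on s0 {v. s0 v \<noteq> v}" using s_inj unfolding s0_def by (auto simp: inj_on_def)
  then have "Just (JC c) (wits B0) B0 \<in> CSV CS" unfolding CSV_def B0_def using A s0 by blast
  then have B0_thm: "{} \<turnstile> Just (JC c) (wits B0) B0" by (rule provable_CSV)
  have "{} \<turnstile> rename (id(a:=y)) p" if y: "y \<notin> allvars A" "\<not> is_wit y" for y
  proof -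
    let ?r = "id(a:=y)"
    have "y \<notin> allvars B0"
    proof
      assume "y \<in> allvars B0"
      then obtain v where "v \<in> allvars A" "y = s0 v"
        using allvars_substs[of s0 A] y(1) unfolding B0_def by blast
      then show False using y s0 by (cases "s0 v = v") auto
    qed
    then have "{} \<turnstile> Just (JC c) (finsert y (wits B0)) (subst v0 y B0)"
      using provable_Just_subst[OF B0_thm v0_basic] is_wit_if_in_wits v0_basic by blast
    moreover have "rename ?r B = subst v0 y B0"
      unfolding B B0_def s0_def using s s_inj
      by (intro rename_substs_wit_eq_subst[of A s v0 a y, OF A_basic _ _ v0(2) v0_basic a]) blast+
    ultimately have "{} \<turnstile> Just (JC c) (finsert y (wits B0)) (rename ?r B)" by simp
    then have "{} \<turnstile> Just (JC c) (?r |`| wits B) (rename ?r B)"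
      using provable_Just_subscript_rename_wit a y(2) a_B is_wit_if_in_wits by blast
    then show ?thesis using p_eq by simp
  qed
  then show ?thesis by (intro eventually_cofinite_notin[of "allvars A"]) auto
qed

lemma derives_rename_wit:
  assumes "derives CS H p" and a: "is_wit a" and "\<forall>h\<in>H. a \<notin> allvars h"
  shows "\<forall>\<^sub>F y in cofinite. \<not> is_wit y \<longrightarrow> derives CS H (rename (id(a:=y)) p)"
proof -
  \<comment> \<open>kept folded: the induction method would otherwise expand \<open>id(a:=y)\<close> into a \<open>\<lambda>\<close>-term\<close>
  define r where "r y = id(a:=y)" for y
  have r_apply: "r y v = (if v = a then y else v)" for y v by (simp add: r_def)
  have "\<forall>\<^sub>F y in cofinite. \<not> is_wit y \<longrightarrow> derives CS H (rename (r y) p)"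
    using assms(1,3)
  proof (induction rule: derives.induct)
    case (hyp p)
    then have "rename (r y) p = p" for y by (intro rename_id) (auto simp: r_apply)
    then have "derives CS {p} (rename (r y) p)" for y by (simp only:) (rule derives.hyp)
    then show ?case by (blast intro: always_eventually)
  next
    case (ax p)
    have "derives CS {} (rename (r y) p)" if "y \<notin> allvars p" "\<not> is_wit y" for y
    proof (rule derives.ax)
      show "axiom (rename (r y) p)"
        using ax.hyps(1) that(1) by (intro axiom_rename) (auto simp: inj_on_def r_apply)
      show "henkin (rename (r y) p)"
        using ax.hyps(2) a that(2) by (intro henkin_rename) (auto simp: r_apply)
    qed
    then show ?case by (intro eventually_cofinite_notin[of "allvars p"]) auto
  next
    case (cs p)
    show ?case unfolding r_def
      using provable_rename_wit_CSV[OF cs.hyps a] by (rule eventually_mono) (blast intro: derives_thm)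
  next
    case (mp H1 p q H2)
    then have "\<forall>\<^sub>F y in cofinite. \<not> is_wit y \<longrightarrow> derives CS H1 (Imp (rename (r y) p) (rename (r y) q))"
      and "\<forall>\<^sub>F y in cofinite. \<not> is_wit y \<longrightarrow> derives CS H2 (rename (r y) p)"
      by auto
    then show ?case by eventually_elim (auto intro: derives.mp)
  next
    case (gen H p x)
    then have "rename (r y) (All x p) = All x (rename (r y) p)" for y
      using a by (auto simp: r_apply)
    with gen show ?case by (auto elim!: eventually_mono intro: derives.gen)
  qed
  then show ?thesis by (simp only: r_def)
qed

lemma provable_All_rename_wit:
  assumes p: "\<Gamma> \<turnstile> p" and a: "is_wit a" "\<forall>h\<in>\<Gamma>. a \<notin> allvars h"
  shows "\<forall>\<^sub>F y in cofinite. \<not> is_wit y \<longrightarrow> \<Gamma> \<turnstile> All y (rename (id(a:=y)) p)"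
proof -
  obtain H where H: "H \<subseteq> \<Gamma>" "derives CS H p" using p unfolding provable_def by blast
  have "finite (\<Union>h\<in>H. fv h)"
    using derives_finite[OF H(2)] by (auto intro: finite_subset[OF fv_subset_allvars])
  then have "\<forall>\<^sub>F y in cofinite. y \<notin> (\<Union>h\<in>H. fv h)" by (rule eventually_cofinite_notin)
  moreover have "\<forall>\<^sub>F y in cofinite. \<not> is_wit y \<longrightarrow> derives CS H (rename (id(a:=y)) p)"
    using derives_rename_wit[OF H(2) a(1)] a(2) H(1) by blast
  ultimately show ?thesis
    by eventually_elim (use H(1) in \<open>auto simp: provable_def intro: derives.gen\<close>)
qed

lemma provable_All_rename_Just_imp_Just:
  assumes imp: "{} \<turnstile> Imp (All y (rename (id(a:=y)) p)) p'" and t: "henkin_tm t"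
    and hp: "henkin p" "henkin p'" and a: "is_wit a" and y: "\<not> is_wit y"
    and p_wits: "fset (wits p) \<subseteq> insert a (fset (wits p'))"
  shows "\<exists>s. henkin_tm s \<and> {} \<turnstile> Imp (All y (rename (id(a:=y)) (Just t (wits p) p))) (Just s (wits p') p')"
proof -
  let ?r = "id(a:=y)"
  have R_wits: "fset (wits (rename ?r p)) \<subseteq> fset (wits p) - {a}" by (rule wits_rename_upd[OF a y])
  then have "wits (rename ?r p) |\<subseteq>| wits p'" using p_wits by (auto simp: less_eq_fset.rep_eq)
  moreover have "wits (rename ?r p) |\<subseteq>| ?r |`| wits p" using R_wits by (force simp: less_eq_fset.rep_eq)
  moreover have "fset (?r |`| wits p) \<subseteq> insert y (fset (wits p'))" using p_wits by auto
  moreover have "henkin (rename ?r p)" using hp(1) a y by (intro henkin_rename) auto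
  ultimately obtain s where "henkin_tm s"
      "{} \<turnstile> Imp (All y (Just t (?r |`| wits p) (rename ?r p))) (Just s (wits p') p')"
    using provable_All_Just_imp_Just[OF imp t _ hp(2) y] by blast
  moreover have "rename_tm ?r t = t"
    using t henkin_tm_allvars_not_wit a by (intro rename_tm_id) auto
  ultimately show ?thesis by auto
qed

lemma provable_All_rename_imp_inst:
  assumes "disjunctive G" and "distinct (letters G)"
    and hx: "henkin (All x \<phi>)" and a: "is_wit a" "a \<notin> allvars \<phi>"
    and y: "\<not> is_wit y" "y \<notin> allvars \<phi>" "y \<noteq> x"
    and "\<forall>i\<in>set (letters G). i \<noteq> q \<longrightarrow> henkin (\<chi> i) \<and> a \<notin> allvars (\<chi> i) \<and> y \<notin> allvars (\<chi> i)"
    and "\<psi> \<in> inst (\<chi>(q := subst x a \<phi>)) G"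
  shows "\<exists>\<psi>'\<in>inst (\<chi>(q := All x \<phi>)) G. {} \<turnstile> Imp (All y (rename (id(a:=y)) \<psi>)) \<psi>'"
proof -
  define ca where "ca = \<chi>(q := subst x a \<phi>)"
  define cf where "cf = \<chi>(q := All x \<phi>)"
  define r where "r = id(a:=y)"
  define ok where
    "ok G \<longleftrightarrow> (\<forall>i\<in>set (letters G). i \<noteq> q \<longrightarrow> henkin (\<chi> i) \<and> a \<notin> allvars (\<chi> i) \<and> y \<notin> allvars (\<chi> i))"
    for G
  have h_subst: "henkin (subst x a \<phi>)" using hx unfolding subst_def by (intro henkin_substs) auto
  have henkin_ca: "henkin p" if "p \<in> inst ca G" "ok G" for p G
    using henkin_inst_upd[OF h_subst _ that(1)[unfolded ca_def]] that(2) unfolding ok_def by blast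
  have henkin_cf: "henkin p" if "p \<in> inst cf G" "ok G" for p G
    using henkin_inst_upd[OF hx _ that(1)[unfolded cf_def]] that(2) unfolding ok_def by blast
  have r_basic: "\<forall>v. \<not> is_wit v \<longrightarrow> \<not> is_wit (r v)" using a y unfolding r_def by auto
  have unaffected: "\<psi> \<in> inst cf G \<and> rename r \<psi> = \<psi> \<and> y \<notin> fv \<psi> \<and> henkin \<psi>"
    if "q \<notin> set (letters G)" "\<psi> \<in> inst ca G" "ok G" for G \<psi>
  proof -
    have \<psi>: "\<psi> \<in> inst \<chi> G" "\<psi> \<in> inst cf G"
      using that(1,2) inst_upd_notin_letters unfolding ca_def cf_def by blast+
    have "\<forall>i\<in>set (letters G). henkin (\<chi> i) \<and> a \<notin> allvars (\<chi> i) \<and> y \<notin> allvars (\<chi> i)"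
      using that(1,3) unfolding ok_def by metis
    then show ?thesis using \<psi> inst_rename_fresh[OF \<psi>(1) a(1)] henkin_inst[OF _ \<psi>(1)]
      unfolding r_def by blast
  qed
  have unaffected_case: "\<exists>\<psi>'\<in>inst cf G. {} \<turnstile> Imp (All y (rename r \<psi>)) \<psi>'"
    if "q \<notin> set (letters G)" "\<psi> \<in> inst ca G" "ok G" for G \<psi>
    using unaffected[OF that] provable_All_imp_self[of y \<psi>] y(1) by auto
  have "\<exists>\<psi>'\<in>inst cf G. {} \<turnstile> Imp (All y (rename r \<psi>)) \<psi>'"
    using assms(1,2,9,10) unfolding ok_def[symmetric] ca_def[symmetric]
  proof (induction G arbitrary: \<psi>)
    case (TL i)
    show ?case
    proof (cases "i = q")
      case True
      then have "rename r \<psi> = subst x y \<phi>"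
        using TL.prems(4) rename_upd_subst_fresh[OF a(2)] by (simp add: ca_def r_def)
      then have "{} \<turnstile> Imp (All y (rename r \<psi>)) (All x \<phi>)"
        using provable_All_alpha[OF hx y(2,3,1)] by simp
      then show ?thesis by (rule bexI) (simp add: True cf_def)
    qed (rule unaffected_case; use TL.prems in auto)
  next
    case (TOr G H)
    obtain g h where gh: "\<psi> = Or g h" "g \<in> inst ca G" "h \<in> inst ca H"
      using TOr.prems(4) by auto
    have dG: "disjunctive G" "distinct (letters G)" and dH: "disjunctive H" "distinct (letters H)"
      and ok: "ok G" "ok H" and dist: "set (letters G) \<inter> set (letters H) = {}"
      using TOr.prems(1-3) by (auto simp: ok_def)
    consider (left) "q \<in> set (letters G)" | (right) "q \<in> set (letters H)"
      | (none) "q \<notin> set (letters (TOr G H))"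
      by auto
    then show ?case
    proof cases
      case left
      obtain g' where g': "g' \<in> inst cf G" "{} \<turnstile> Imp (All y (rename r g)) g'"
        using TOr.IH(1)[OF dG ok(1) gh(2)] by blast
      have h: "h \<in> inst cf H" "rename r h = h" "y \<notin> fv h" "henkin h"
        using unaffected[OF _ gh(3) ok(2)] left dist by blast+
      have "{} \<turnstile> Imp (All y (Or (rename r g) h)) (Or g' h)"
        using henkin_rename[OF henkin_ca[OF gh(2) ok(1)] r_basic] henkin_cf[OF g'(1) ok(1)]
        by (rule provable_All_Or_left[OF g'(2) _ _ h(4) y(1) h(3)])
      moreover have "Or g' h \<in> inst cf (TOr G H)" using g'(1) h(1) by auto
      ultimately show ?thesis using gh(1) h(2) by auto
    next
      case right
      obtain h' where h': "h' \<in> inst cf H" "{} \<turnstile> Imp (All y (rename r h)) h'"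
        using TOr.IH(2)[OF dH ok(2) gh(3)] by blast
      have g: "g \<in> inst cf G" "rename r g = g" "y \<notin> fv g" "henkin g"
        using unaffected[OF _ gh(2) ok(1)] right dist by blast+
      have "{} \<turnstile> Imp (All y (Or g (rename r h))) (Or g h')"
        using henkin_rename[OF henkin_ca[OF gh(3) ok(2)] r_basic] henkin_cf[OF h'(1) ok(2)]
        by (rule provable_All_Or_right[OF h'(2) g(4) _ _ y(1) g(3)])
      moreover have "Or g h' \<in> inst cf (TOr G H)" using g(1) h'(1) by auto
      ultimately show ?thesis using gh(1) g(2) by auto
    next
      case none
      then show ?thesis using TOr.prems by (intro unaffected_case) auto
    qed
  next
    case (TBox G)
    show ?case
    proof (cases "q \<in> set (letters G)")
      case True
      obtain t p where \<psi>: "\<psi> = Just t (wits p) p" "henkin_tm t" "p \<in> inst ca G"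
        using TBox.prems(4) by auto
      have dG: "disjunctive G" "distinct (letters G)" and ok: "ok G"
        using TBox.prems(1-3) by (auto simp: ok_def)
      obtain p' where p': "p' \<in> inst cf G" "{} \<turnstile> Imp (All y (rename r p)) p'"
        using TBox.IH[OF dG ok \<psi>(3)] by blast
      have "fset (wits (subst x a \<phi>)) \<subseteq> insert a (fset (wits (All x \<phi>)))"
        using wits_substs[of "id(x:=a)" \<phi>] unfolding subst_def by auto
      then have "fset (wits p) \<subseteq> insert a (fset (wits p'))"
        using wits_inst_upd \<psi>(3) p'(1) unfolding ca_def cf_def by blast
      then obtain s where "henkin_tm s" "{} \<turnstile> Imp (All y (rename r \<psi>)) (Just s (wits p') p')"
        using provable_All_rename_Just_imp_Just[OF p'(2)[unfolded r_def] \<psi>(2) henkin_ca[OF \<psi>(3) ok]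
            henkin_cf[OF p'(1) ok] a(1) y(1)]
        unfolding \<psi>(1) r_def by blast
      then show ?thesis using p'(1) by auto
    qed (rule unaffected_case; use TBox.prems in auto)
  qed simp_all
  then show ?thesis by (simp only: ca_def cf_def r_def)
qed

lemma provable_inst_All_if_provable_inst_wit:
  assumes F: "disjunctive F" "distinct (letters F)"
    and hx: "henkin (All x \<phi>)" and a: "is_wit a" "a \<notin> fv (All x \<phi>)"
    and \<chi>: "\<forall>i\<in>set (letters F). i \<noteq> q \<longrightarrow> henkin (\<chi> i) \<and> a \<notin> fv (\<chi> i)"
    and \<Gamma>: "\<forall>g\<in>\<Gamma>. basic g"
    and \<psi>: "\<psi> \<in> inst (\<chi>(q := subst x a \<phi>)) F" "\<Gamma> \<turnstile> \<psi>"
  shows "\<exists>\<psi>'\<in>inst (\<chi>(q := All x \<phi>)) F. \<Gamma> \<turnstile> \<psi>'"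
proof -
  have "a \<notin> fv \<phi>" using hx a by auto
  then have a_\<phi>: "a \<notin> allvars \<phi>" using henkin_wit_notin_allvars hx a(1) by simp
  have a_\<chi>: "\<forall>i\<in>set (letters F). i \<noteq> q \<longrightarrow> henkin (\<chi> i) \<and> a \<notin> allvars (\<chi> i)"
    using \<chi> henkin_wit_notin_allvars[OF _ a(1)] by blast
  have a_\<Gamma>: "\<forall>g\<in>\<Gamma>. a \<notin> allvars g" using \<Gamma> wit_in_wits_iff[OF a(1)] unfolding basic_def by auto
  have "finite (allvars \<phi> \<union> {x} \<union> (\<Union>i\<in>set (letters F). allvars (\<chi> i)))" by simp
  then have "\<forall>\<^sub>F y in cofinite. y \<notin> allvars \<phi> \<union> {x} \<union> (\<Union>i\<in>set (letters F). allvars (\<chi> i))"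
    by (rule eventually_cofinite_notin)
  then obtain y where y: "\<not> is_wit y" "y \<notin> allvars \<phi>" "y \<noteq> x" "\<forall>i\<in>set (letters F). y \<notin> allvars (\<chi> i)"
    and gen: "\<Gamma> \<turnstile> All y (rename (id(a:=y)) \<psi>)"
    using ex_basic_if_eventually_cofinite[OF eventually_conj[OF _ provable_All_rename_wit[OF \<psi>(2) a(1) a_\<Gamma>]]]
    by blast
  obtain \<psi>' where \<psi>': "\<psi>' \<in> inst (\<chi>(q := All x \<phi>)) F" "{} \<turnstile> Imp (All y (rename (id(a:=y)) \<psi>)) \<psi>'"
    using provable_All_rename_imp_inst[OF F hx a(1) a_\<phi> y(1-3) _ \<psi>(1)] a_\<chi> y(4) by blast
  then show ?thesis using provable_mp[OF provable_from_empty[OF \<psi>'(2)] gen] by blast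
qed

end

theorem mainTheorem15:
  fixes CS :: "fm set" and F :: tmpl and q :: nat and \<chi> :: "nat \<Rightarrow> fm"
    and \<Gamma> :: "fm set" and x a :: var and \<phi> :: fm
  assumes "const_spec CS" and "variant_closed CS" and "axiomatically_appropriate CS"
    and "template F" and "disjunctive F"
    and "\<forall>\<psi>\<in>\<Gamma>. basic \<psi>"
    and "\<forall>i\<in>set (letters F). i \<noteq> q \<longrightarrow> henkin (\<chi> i)"
    and "henkin (All x \<phi>)"
    and "is_wit a"
    and "a \<notin> fv (All x \<phi>)"
    and "\<forall>i\<in>set (letters F). i \<noteq> q \<longrightarrow> a \<notin> fv (\<chi> i)"
    and "consistent CS (\<Gamma> \<union> inst (\<chi>(q := All x \<phi>)) (TNeg F))"
  shows "consistent CS (\<Gamma> \<union> inst (\<chi>(q := subst x a \<phi>)) (TNeg F))"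
proof (rule ccontr)
  interpret appropriate_cs CS using assms(1,3) by unfold_locales
  assume "\<not> consistent CS (\<Gamma> \<union> inst (\<chi>(q := subst x a \<phi>)) (TNeg F))"
  then have incons: "\<Gamma> \<union> inst (\<chi>(q := subst x a \<phi>)) (TNeg F) \<turnstile> Bot" unfolding consistent_def by simp
  have cons: "\<not> \<Gamma> \<turnstile> Bot" using assms(12) provable_mono unfolding consistent_def by blast
  have "henkin (subst x a \<phi>)" using assms(8) unfolding subst_def by (intro henkin_substs) auto
  then have "\<forall>i\<in>set (letters F). henkin ((\<chi>(q := subst x a \<phi>)) i)" using assms(7) by simp
  moreover have "\<forall>g\<in>\<Gamma>. henkin g" using assms(6) wits_empty_henkin unfolding basic_def by blast
  ultimately obtain \<psi> where "\<psi> \<in> inst (\<chi>(q := subst x a \<phi>)) F" "\<Gamma> \<turnstile> \<psi>"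
    using provable_inst_if_inconsistent[OF assms(5) _ _ incons cons] by blast
  then obtain \<psi>' where \<psi>': "\<psi>' \<in> inst (\<chi>(q := All x \<phi>)) F" "\<Gamma> \<turnstile> \<psi>'"
    using provable_inst_All_if_provable_inst_wit[OF assms(5) _ assms(8-10) _ assms(6)] assms(4,7,11)
    unfolding template_def by blast
  have "\<Gamma> \<union> inst (\<chi>(q := All x \<phi>)) (TNeg F) \<turnstile> Neg \<psi>'" using \<psi>'(1) by (intro provable_hyp) auto
  moreover have "\<Gamma> \<union> inst (\<chi>(q := All x \<phi>)) (TNeg F) \<turnstile> \<psi>'" by (rule provable_mono[OF \<psi>'(2)]) auto
  ultimately have "\<Gamma> \<union> inst (\<chi>(q := All x \<phi>)) (TNeg F) \<turnstile> Bot" by (rule provable_contradiction)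
  then show False using assms(12) unfolding consistent_def by blast
qed

end
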